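(* Let $A$ be a band operator on $\ell^2(\mathbb{Z})$ with band-width $w$. Then for all $T\in\{A-\lambda,(A-\lambda)^*:\lambda\in\mathbb{C}\}$ and all $N\in\mathbb{N}$, \[ \nu_N(T^+)=\min\Big\{\min_{j=1}^{w}\nu_{j..j+N-1}(T^+),\ \nu_N(T|_{\mathbb{N}})\Big\}, \] where, for $l,r\in\mathbb{N}$, $\nu_{l..r}(T^+)$ is the smallest singular value of the rectangular submatrix $(T^+_{ij})_{i\in1..r+w,\,j\in l..r}$ of $T^+$. If, additionally, $\mathcal{C}(A)=\mathcal{C}(A|_{\mathbb{N}})$, then $\nu_N(T|_{\mathbb{N}})=\nu_N(T)$, so that \[ \nu_N(T^+)=\min\Big\{\min_{j=1}^{w}\nu_{j..j+N-1}(T^+),\ \nu_N(T)\Big\}; \] in particular, $\nu(T^+)\le\nu(T)$ and $\|(T^+)^{-1}\|\ge\|T^{-1}\|$, so that $\sigma(A)\subseteq\sigma(A^+)$ and $\sigma_\varepsilon(A)\subseteq\sigma_\varepsilon(A^+)$ for all $\varepsilon>0$.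
   Context: $\mathbb{N}=\{1,2,\dots\}$, $a..b:=\{n\in\mathbb{Z}:a\le n\le b\}$. A band operator with band-width $w$ on $\ell^2(\mathbb{Z})$ is a bounded operator with matrix entries $A_{ij}=0$ for $|i-j|>w$. $T|_{\mathbb{N}}:\ell^2(\mathbb{N})\to\ell^2(\mathbb{Z})$ is the restriction of $T$ to $\ell^2(\mathbb{N})$ (matrix $(T_{ij})_{i\in\mathbb{Z},j\in\mathbb{N}}$); $T^+$ is the compression to $\ell^2(\mathbb{N})$ (matrix $(T_{ij})_{i,j\in\mathbb{N}}$). Lower norm: $\nu(T):=\inf\{\|Tx\|:\|x\|=1\}$; local lower norm: $\nu_N(T):=\inf\{\|Tx\|:\|x\|=1,\ \operatorname{diam}(\operatorname{supp}x)<N\}$; for a set $\mathbb{I}$, $\nu_{\mathbb{I}}(T):=\inf\{\|Tx\|:\operatorname{supp}x\subseteq\mathbb{I},\|x\|=1\}$. For $N\in\mathbb{N}$, an $N$-column submatrix of an operator $B$ with band-width $w$ is a $(N+2w)\times N$ matrix $C=(C_{ij})_{i\in 1-w..N+w,\,j\in1..N}$ with $C_{ij}=B_{k+i,k+j}$ for some $k\in\mathbb{Z}$ with $k+1..k+N$ inside the column index set ($C_{ij}:=0$ where undefined); $\mathcal{C}(B)$ is the set of all $N$-column submatrices of $B$ for all $N\in\mathbb{N}$. $\|T^{-1}\|:=\infty$ if $T$ is not invertible; $\sigma_\varepsilon(T):=\{\lambda:\|(T-\lambda)^{-1}\|>1/\varepsilon\}$. *)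

theory Defs
  imports "HOL-Analysis.Analysis"
begin

text \<open>Operators on l2(Z) are represented by their matrices (int => int => complex);
vectors by functions int => complex. l2(N) is the subspace of vectors supported in {1..}.\<close>

type_synonym mat = "int \<Rightarrow> int \<Rightarrow> complex"
type_synonym vec = "int \<Rightarrow> complex"

definition natset :: "int set" where "natset = {1..}"

definition supp :: "vec \<Rightarrow> int set" where "supp x = {i. x i \<noteq> 0}"

definition is_l2 :: "vec \<Rightarrow> bool" where
  "is_l2 x \<longleftrightarrow> (\<lambda>i. (cmod (x i))\<^sup>2) summable_on UNIV"

definition l2norm :: "vec \<Rightarrow> real" where
  "l2norm x = sqrt (\<Sum>\<^sub>\<infinity>i. (cmod (x i))\<^sup>2)"

text \<open>Band operator with band-width w: bounded operator whose matrix vanishes off the band.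
For band matrices, boundedness of the operator is equivalent to uniform boundedness of entries.\<close>
definition band_op :: "mat \<Rightarrow> nat \<Rightarrow> bool" where
  "band_op A w \<longleftrightarrow> (\<forall>i j. nat \<bar>i - j\<bar> > w \<longrightarrow> A i j = 0) \<and> (\<exists>C. \<forall>i j. cmod (A i j) \<le> C)"

definition mv :: "mat \<Rightarrow> vec \<Rightarrow> vec" where
  "mv T x = (\<lambda>i. \<Sum>\<^sub>\<infinity>j. T i j * x j)"

definition restr :: "int set \<Rightarrow> vec \<Rightarrow> vec" where
  "restr R v = (\<lambda>i. if i \<in> R then v i else 0)"

definition shiftm :: "mat \<Rightarrow> complex \<Rightarrow> mat" where
  "shiftm A z = (\<lambda>i j. A i j - (if i = j then z else 0))"

definition adj :: "mat \<Rightarrow> mat" where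
  "adj T = (\<lambda>i j. cnj (T j i))"

definition Ts :: "mat \<Rightarrow> mat set" where
  "Ts A = {shiftm A z | z. True} \<union> {adj (shiftm A z) | z. True}"

text \<open>nu_S(T) with input vectors supported in S and output compressed to rows O.
 T^+ : S \<subseteq> natset, O = natset;  T|_N : S \<subseteq> natset, O = UNIV;  T : O = UNIV.\<close>
definition lnu_set :: "int set \<Rightarrow> mat \<Rightarrow> int set \<Rightarrow> real" where
  "lnu_set S T R = Inf {l2norm (restr R (mv T x)) | x. is_l2 x \<and> supp x \<subseteq> S \<and> l2norm x = 1}"

text \<open>local lower norm: diam(supp x) < N, i.e. supp x inside N consecutive integers\<close>
definition lnu_loc :: "nat \<Rightarrow> mat \<Rightarrow> int set \<Rightarrow> int set \<Rightarrow> real" where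
  "lnu_loc N T S R = Inf {l2norm (restr R (mv T x)) | x. is_l2 x \<and> supp x \<subseteq> S \<and> l2norm x = 1
      \<and> (\<exists>k. supp x \<subseteq> {k + 1 .. k + int N})}"

definition L2on :: "int set \<Rightarrow> vec set" where
  "L2on S = {x. is_l2 x \<and> supp x \<subseteq> S}"

definition opS :: "mat \<Rightarrow> int set \<Rightarrow> vec \<Rightarrow> vec" where
  "opS T S = (\<lambda>x. restr S (mv T x))"

definition invertible_on :: "mat \<Rightarrow> int set \<Rightarrow> bool" where
  "invertible_on T S \<longleftrightarrow> bij_betw (opS T S) (L2on S) (L2on S)"

definition invnorm :: "mat \<Rightarrow> int set \<Rightarrow> ereal" where
  "invnorm T S = (if invertible_on T S
     then (SUP y \<in> {y \<in> L2on S. l2norm y = 1}. ereal (l2norm (inv_into (L2on S) (opS T S) y)))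
     else \<infinity>)"

definition spec :: "mat \<Rightarrow> int set \<Rightarrow> complex set" where
  "spec A S = {z. \<not> invertible_on (shiftm A z) S}"

definition pspec :: "real \<Rightarrow> mat \<Rightarrow> int set \<Rightarrow> complex set" where
  "pspec \<epsilon> A S = {z. invnorm (shiftm A z) S > ereal (1 / \<epsilon>)}"

text \<open>C(B): all N-column submatrices (as pairs (N, matrix padded by 0)) of B,
 whose column index set is J and whose rows are indexed by all of Z.\<close>
definition csubs :: "mat \<Rightarrow> int set \<Rightarrow> nat \<Rightarrow> (nat \<times> mat) set" where
  "csubs B J w = {(N, (\<lambda>i j. if i \<in> {1 - int w .. int N + int w} \<and> j \<in> {1 .. int N}
        then B (k + i) (k + j) else 0)) | N k. N \<ge> 1 \<and> {k + 1 .. k + int N} \<subseteq> J}"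

end

(*
  A vector supported in N consecutive columns either
  starts within the first w columns, where compression to the half line genuinely cuts rows of
  T x, or starts further right, where T x already lives in the half line; this gives the formula
  for the local lower norm of the compression T^+.

  Under C(A) = C(A|_N) every finite section of A, and hence of each T in Ts A, reappears
  translated into the half line. So vectors of finite support can be moved into the half line
  without changing the norm of T x, and truncating an arbitrary vector to a finite section gives
  nu(T^+) <= nu(T). If T^+ is invertible, its inverse is bounded (bounded inverse theorem, via
  Baire category), so T is bounded below; so is the adjoint T', whose compression is the adjoint
  of T^+, with the same constant. Then T T' is coercive, a Banach fixed point iteration shows
  that T is onto, and T is invertible with an inverse of norm at most that of the inverse of
  T^+; the spectral inclusions follow.
*)

theory Submission
  imports Defs "HOL-Library.Diagonal_Subsequence"
begin

section \<open>Square-summable vectors\<close>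

lemma l2norm_power2: "(l2norm x)^2 = (\<Sum>\<^sub>\<infinity>i. (cmod (x i))^2)"
  unfolding l2norm_def by (simp add: infsum_nonneg)

lemma l2norm_nonneg [simp]: "0 \<le> l2norm x"
  unfolding l2norm_def by (simp add: infsum_nonneg)

lemma sum_power2_le_l2norm:
  assumes "is_l2 x" "finite F"
  shows "(\<Sum>i\<in>F. (cmod (x i))^2) \<le> (l2norm x)^2"
  unfolding l2norm_power2 using assms unfolding is_l2_def
  by (intro finite_sum_le_infsum) auto

lemma l2_boundI:
  assumes "0 \<le> B" "\<And>F. finite F \<Longrightarrow> (\<Sum>i\<in>F. (cmod (x i))^2) \<le> B^2"
  shows "is_l2 x \<and> l2norm x \<le> B"
proof
  have summable: "(\<lambda>i. (cmod (x i))^2) summable_on UNIV"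
    by (rule nonneg_bdd_above_summable_on) (use assms in \<open>auto intro!: bdd_aboveI2\<close>)
  then show "is_l2 x" unfolding is_l2_def .
  have "(l2norm x)^2 \<le> B^2" unfolding l2norm_power2
    using summable assms by (intro infsum_le_finite_sums) auto
  then show "l2norm x \<le> B" using assms(1) by (rule power2_le_imp_le)
qed

lemma infsum_finite_support:
  fixes f :: "'a \<Rightarrow> 'b::{comm_monoid_add,t2_space}"
  assumes "finite F" "\<And>j. j \<notin> F \<Longrightarrow> f j = 0"
  shows "infsum f UNIV = sum f F" "f summable_on UNIV"
proof -
  have "(f has_sum sum f F) UNIV"
    using has_sum_cong_neutral[of F UNIV f f] has_sum_finite[OF assms(1)] assms(2) by auto
  then show "infsum f UNIV = sum f F" "f summable_on UNIV"
    by (auto simp: infsumI summable_on_def)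
qed

lemma l2_finite_support:
  assumes "finite F" "supp x \<subseteq> F"
  shows "is_l2 x" "(l2norm x)^2 = (\<Sum>i\<in>F. (cmod (x i))^2)"
proof -
  have "\<And>j. j \<notin> F \<Longrightarrow> (cmod (x j))^2 = 0" using assms(2) unfolding supp_def by auto
  from infsum_finite_support[OF assms(1) this]
  show "is_l2 x" "(l2norm x)^2 = (\<Sum>i\<in>F. (cmod (x i))^2)"
    unfolding is_l2_def l2norm_power2 by simp_all
qed

lemma norm_le_l2norm:
  assumes "is_l2 x" shows "cmod (x i) \<le> l2norm x"
  using sum_power2_le_l2norm[OF assms, of "{i}"] by (auto intro: power2_le_imp_le)

lemma l2_zero [simp]: "is_l2 (\<lambda>i. 0)" "l2norm (\<lambda>i. 0) = 0"
  using l2_boundI[of 0 "\<lambda>i. 0"] by (auto intro: order_antisym)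

lemma l2norm_eq_0_iff:
  assumes "is_l2 x" shows "l2norm x = 0 \<longleftrightarrow> x = (\<lambda>i. 0)"
  using norm_le_l2norm[OF assms] by (auto intro: norm_le_zero_iff[THEN iffD1])

lemma l2_cong:
  assumes "\<And>i. cmod (x i) = cmod (y i)"
  shows "is_l2 x = is_l2 y" "l2norm x = l2norm y"
  unfolding is_l2_def l2norm_def using assms by simp_all

lemma L2_set_le_l2norm:
  assumes "is_l2 x" "finite F"
  shows "L2_set (\<lambda>i. cmod (x i)) F \<le> l2norm x"
  unfolding L2_set_def using real_sqrt_le_mono[OF sum_power2_le_l2norm[OF assms]] by simp

lemma l2_add:
  assumes "is_l2 x" "is_l2 y"
  shows "is_l2 (\<lambda>i. x i + y i) \<and> l2norm (\<lambda>i. x i + y i) \<le> l2norm x + l2norm y"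
proof (rule l2_boundI)
  fix F :: "int set" assume F: "finite F"
  have "L2_set (\<lambda>i. cmod (x i + y i)) F \<le> L2_set (\<lambda>i. cmod (x i) + cmod (y i)) F"
    by (rule L2_set_mono) (auto simp: norm_triangle_ineq)
  also have "\<dots> \<le> L2_set (\<lambda>i. cmod (x i)) F + L2_set (\<lambda>i. cmod (y i)) F"
    by (rule L2_set_triangle_ineq)
  also have "\<dots> \<le> l2norm x + l2norm y"
    using L2_set_le_l2norm[OF assms(1) F] L2_set_le_l2norm[OF assms(2) F] by simp
  finally have "(L2_set (\<lambda>i. cmod (x i + y i)) F)^2 \<le> (l2norm x + l2norm y)^2"
    by (intro power_mono) (auto simp: L2_set_def sum_nonneg)
  then show "(\<Sum>i\<in>F. (cmod (x i + y i))^2) \<le> (l2norm x + l2norm y)^2"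
    unfolding L2_set_def by (simp add: sum_nonneg)
qed simp

lemma l2_scale:
  assumes "is_l2 x"
  shows "is_l2 (\<lambda>i. c * x i) \<and> l2norm (\<lambda>i. c * x i) = cmod c * l2norm x"
proof
  have sq: "(\<lambda>i. (cmod (c * x i))^2) = (\<lambda>i. (cmod c)^2 * (cmod (x i))^2)"
    by (simp add: norm_mult power_mult_distrib)
  show "is_l2 (\<lambda>i. c * x i)" using assms unfolding is_l2_def sq
    by (intro summable_on_cmult_right)
  have "(l2norm (\<lambda>i. c * x i))^2 = (cmod c * l2norm x)^2"
    unfolding l2norm_power2 sq power_mult_distrib
    using assms unfolding is_l2_def by (simp add: infsum_cmult_right)
  then show "l2norm (\<lambda>i. c * x i) = cmod c * l2norm x"
    by (rule power2_eq_imp_eq) auto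
qed

lemma l2_diff:
  assumes "is_l2 x" "is_l2 y"
  shows "is_l2 (\<lambda>i. x i - y i) \<and> l2norm (\<lambda>i. x i - y i) \<le> l2norm x + l2norm y"
  using l2_add[OF assms(1), of "\<lambda>i. - y i"] assms(2) l2_cong[of "\<lambda>i. - y i" y] by simp

lemma l2_sum:
  assumes "finite D" "\<And>d. d \<in> D \<Longrightarrow> is_l2 (u d) \<and> l2norm (u d) \<le> B"
  shows "is_l2 (\<lambda>i. \<Sum>d\<in>D. u d i) \<and> l2norm (\<lambda>i. \<Sum>d\<in>D. u d i) \<le> real (card D) * B"
  using assms
proof (induction D rule: finite_induct)
  case (insert a D)
  have "is_l2 (u a) \<and> l2norm (u a) \<le> B"
    and "is_l2 (\<lambda>i. \<Sum>d\<in>D. u d i) \<and> l2norm (\<lambda>i. \<Sum>d\<in>D. u d i) \<le> real (card D) * B"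
    using insert by simp_all
  then show ?case
    using l2_add[of "u a" "\<lambda>i. \<Sum>d\<in>D. u d i"] insert(1,2) by (auto simp: algebra_simps)
qed simp

lemma l2_shift:
  shows "is_l2 (\<lambda>i. x (i + s)) = is_l2 x" "l2norm (\<lambda>i. x (i + s)) = l2norm x"
proof -
  have bij: "bij_betw (\<lambda>i::int. i + s) UNIV UNIV"
    by (rule bij_betw_byWitness[where f'="\<lambda>i. i - s"]) auto
  show "is_l2 (\<lambda>i. x (i + s)) = is_l2 x" unfolding is_l2_def
    using summable_on_reindex_bij_betw[OF bij, of "\<lambda>i. (cmod (x i))^2"] by simp
  show "l2norm (\<lambda>i. x (i + s)) = l2norm x" unfolding l2norm_def
    using infsum_reindex_bij_betw[OF bij, of "\<lambda>i. (cmod (x i))^2"] by simp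
qed

lemma l2_restr:
  assumes "is_l2 y"
  shows "is_l2 (restr R y) \<and> l2norm (restr R y) \<le> l2norm y"
proof (rule l2_boundI)
  fix F :: "int set" assume "finite F"
  have "(\<Sum>i\<in>F. (cmod (restr R y i))^2) \<le> (\<Sum>i\<in>F. (cmod (y i))^2)"
    by (rule sum_mono) (auto simp: restr_def)
  also have "\<dots> \<le> (l2norm y)^2" by (rule sum_power2_le_l2norm[OF assms \<open>finite F\<close>])
  finally show "(\<Sum>i\<in>F. (cmod (restr R y i))^2) \<le> (l2norm y)^2" .
qed simp

lemma restr_UNIV [simp]: "restr UNIV y = y"
  unfolding restr_def by simp

lemma restr_id: "supp y \<subseteq> R \<Longrightarrow> restr R y = y"
  unfolding restr_def supp_def by (rule ext) auto

lemma l2_tail: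
  assumes "is_l2 x" "\<delta> > 0"
  shows "\<exists>n::nat. l2norm (\<lambda>i. x i - restr {- int n .. int n} x i) \<le> \<delta>"
proof -
  obtain F where F: "finite F" "(l2norm x)^2 - \<delta>^2 \<le> (\<Sum>i\<in>F. (cmod (x i))^2)"
    using infsum_finite_approximation[of "\<lambda>i. (cmod (x i))^2" UNIV "\<delta>^2"] assms
    unfolding is_l2_def l2norm_power2 dist_real_def by auto
  obtain n :: nat where n: "F \<subseteq> {- int n .. int n}"
  proof -
    have "\<forall>i\<in>F. \<bar>i\<bar> \<le> Max (abs ` F)" using F(1) by auto
    then show ?thesis by (intro that[of "nat (Max (abs ` F))"]) (force simp: abs_le_iff)
  qed
  let ?W = "{- int n .. int n}"
  have "is_l2 (\<lambda>i. x i - restr ?W x i) \<and> l2norm (\<lambda>i. x i - restr ?W x i) \<le> \<delta>"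
  proof (rule l2_boundI)
    fix G :: "int set" assume G: "finite G"
    have "(\<Sum>i\<in>G. (cmod (x i - restr ?W x i))^2) = (\<Sum>i\<in>G - ?W. (cmod (x i))^2)"
      by (rule sum.mono_neutral_cong_right) (auto simp: restr_def G)
    moreover have "(\<Sum>i\<in>G - ?W. (cmod (x i))^2) + (\<Sum>i\<in>F. (cmod (x i))^2)
        = (\<Sum>i\<in>(G - ?W) \<union> F. (cmod (x i))^2)"
      using n G F(1) by (intro sum.union_disjoint[symmetric]) auto
    moreover have "\<dots> \<le> (l2norm x)^2" using sum_power2_le_l2norm[OF assms(1)] G F(1) by simp
    ultimately show "(\<Sum>i\<in>G. (cmod (x i - restr ?W x i))^2) \<le> \<delta>^2" using F(2) by simp
  qed (use assms in simp)
  then show ?thesis by blast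
qed

definition delta :: "int \<Rightarrow> vec" where "delta p = (\<lambda>i. if i = p then 1 else 0)"

lemma delta_props: "is_l2 (delta p)" "l2norm (delta p) = 1" "supp (delta p) = {p}"
proof -
  have supp: "supp (delta p) = {p}" by (auto simp: supp_def delta_def)
  then show "is_l2 (delta p)" "supp (delta p) = {p}" using l2_finite_support(1)[of "{p}"] by auto
  have "(l2norm (delta p))^2 = 1" using l2_finite_support(2)[of "{p}"] supp by (simp add: delta_def)
  then show "l2norm (delta p) = 1" using l2norm_nonneg[of "delta p"] by (simp add: power2_eq_1_iff)
qed

section \<open>Band matrices\<close>

definition banded :: "mat \<Rightarrow> nat \<Rightarrow> real \<Rightarrow> bool" where
  "banded T w C \<longleftrightarrow> (\<forall>i j. nat \<bar>i - j\<bar> > w \<longrightarrow> T i j = 0) \<and> (\<forall>i j. cmod (T i j) \<le> C)"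

lemma banded_nonneg: "banded T w C \<Longrightarrow> 0 \<le> C"
  unfolding banded_def using norm_ge_zero order_trans by blast

lemma banded_zero: "banded T w C \<Longrightarrow> nat \<bar>i - j\<bar> > w \<Longrightarrow> T i j = 0"
  unfolding banded_def by blast

lemma banded_norm_le: "banded T w C \<Longrightarrow> cmod (T i j) \<le> C"
  unfolding banded_def by blast

lemma banded_adj: "banded T w C \<Longrightarrow> banded (adj T) w C"
  unfolding banded_def adj_def by (auto simp: abs_minus_commute)

lemma banded_shiftm: "banded A w C \<Longrightarrow> banded (shiftm A z) w (C + cmod z)"
  unfolding banded_def shiftm_def
  by (auto intro: norm_triangle_le_diff add_mono add_increasing2)

lemma Ts_banded:
  assumes "band_op A w" "T \<in> Ts A"
  shows "\<exists>C. banded T w C"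
proof -
  have "\<exists>C. banded A w C" using assms(1) unfolding band_op_def banded_def by blast
  then show ?thesis
    using assms(2) banded_shiftm banded_adj unfolding Ts_def by blast
qed

lemma mv_finite_support:
  assumes "finite F" "supp x \<subseteq> F"
  shows "mv T x i = (\<Sum>j\<in>F. T i j * x j)"
  unfolding mv_def using assms by (intro infsum_finite_support(1)) (auto simp: supp_def)

lemma mv_banded:
  assumes "banded T w C"
  shows "mv T x i = (\<Sum>d\<in>{- int w .. int w}. T i (i + d) * x (i + d))"
proof -
  have "bij_betw (\<lambda>d. i + d) UNIV UNIV"
    by (rule bij_betw_byWitness[where f'="\<lambda>j. j - i"]) auto
  then have "mv T x i = (\<Sum>\<^sub>\<infinity>d. T i (i + d) * x (i + d))"
    unfolding mv_def using infsum_reindex_bij_betw[of "\<lambda>d. i + d" UNIV UNIV "\<lambda>j. T i j * x j"]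
    by simp
  also have "\<dots> = (\<Sum>d\<in>{- int w .. int w}. T i (i + d) * x (i + d))"
    by (rule infsum_finite_support(1)) (use banded_zero[OF assms] in auto)
  finally show ?thesis .
qed

lemma mv_diff:
  assumes "banded T w C"
  shows "mv T (\<lambda>i. x i - y i) = (\<lambda>i. mv T x i - mv T y i)"
  by (rule ext) (simp add: mv_banded[OF assms] algebra_simps sum_subtractf)

lemma mv_scale:
  assumes "banded T w C"
  shows "mv T (\<lambda>i. c * x i) = (\<lambda>i. c * mv T x i)"
  by (rule ext) (simp add: mv_banded[OF assms] algebra_simps sum_distrib_left)

lemma mv_zero [simp]: "mv T (\<lambda>i. 0) = (\<lambda>i. 0)"
  unfolding mv_def by simp

lemma l2_diagonal:
  assumes "banded T w C" "is_l2 x"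
  shows "is_l2 (\<lambda>i. T i (i + d) * x (i + d)) \<and> l2norm (\<lambda>i. T i (i + d) * x (i + d)) \<le> C * l2norm x"
proof (rule l2_boundI)
  show "0 \<le> C * l2norm x" using banded_nonneg[OF assms(1)] by simp
  fix F :: "int set" assume F: "finite F"
  have "(cmod (T i (i + d)))^2 \<le> C^2" for i
    using banded_norm_le[OF assms(1)] by (intro power_mono) auto
  then have "(\<Sum>i\<in>F. (cmod (T i (i + d) * x (i + d)))^2) \<le> (\<Sum>i\<in>F. C^2 * (cmod (x (i + d)))^2)"
    by (intro sum_mono) (simp add: norm_mult power_mult_distrib mult_right_mono)
  also have "\<dots> \<le> C^2 * (l2norm (\<lambda>i. x (i + d)))^2"
    using sum_power2_le_l2norm[of "\<lambda>i. x (i + d)" F] F assms(2) l2_shift[of x d]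
    by (auto simp: sum_distrib_left[symmetric] intro: mult_left_mono)
  finally show "(\<Sum>i\<in>F. (cmod (T i (i + d) * x (i + d)))^2) \<le> (C * l2norm x)^2"
    using l2_shift[of x d] by (simp add: power_mult_distrib)
qed

lemma l2_mv:
  assumes "banded T w C" "is_l2 x"
  shows "is_l2 (mv T x) \<and> l2norm (mv T x) \<le> (2 * real w + 1) * C * l2norm x"
proof -
  have "mv T x = (\<lambda>i. \<Sum>d\<in>{- int w .. int w}. T i (i + d) * x (i + d))"
    by (rule ext) (rule mv_banded[OF assms(1)])
  moreover have "real (card {- int w .. int w}) = 2 * real w + 1" by simp
  ultimately show ?thesis
    using l2_sum[of "{- int w .. int w}" "\<lambda>d i. T i (i + d) * x (i + d)" "C * l2norm x"]
      l2_diagonal[OF assms] by (simp add: mult.assoc)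
qed

lemma supp_mv_subset:
  assumes "banded T w C" "supp x \<subseteq> {k ..}"
  shows "supp (mv T x) \<subseteq> {k - int w ..}"
proof
  fix i assume i: "i \<in> supp (mv T x)"
  have "x (i + d) = 0" if "d \<in> {- int w .. int w}" "i < k - int w" for d
    using that assms(2) unfolding supp_def by auto
  then show "i \<in> {k - int w ..}"
    using i unfolding supp_def mv_banded[OF assms(1)] by (force intro: sum.neutral)
qed

section \<open>Lower norms\<close>

lemma lnu_set_le:
  assumes "is_l2 x" "supp x \<subseteq> S" "l2norm x = 1"
  shows "lnu_set S T R \<le> l2norm (restr R (mv T x))"
  unfolding lnu_set_def by (rule cInf_lower) (use assms in \<open>auto intro!: bdd_belowI[of _ 0]\<close>)

lemma lnu_set_greatest:
  assumes "p \<in> S"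
    and "\<And>x. is_l2 x \<Longrightarrow> supp x \<subseteq> S \<Longrightarrow> l2norm x = 1 \<Longrightarrow> m \<le> l2norm (restr R (mv T x))"
  shows "m \<le> lnu_set S T R"
  unfolding lnu_set_def
  by (rule cInf_greatest) (use assms delta_props[of p] in \<open>auto intro!: exI[of _ "delta p"]\<close>)

lemma lnu_set_nonneg: "p \<in> S \<Longrightarrow> 0 \<le> lnu_set S T R"
  by (rule lnu_set_greatest) auto

lemma lnu_loc_le:
  assumes "is_l2 x" "supp x \<subseteq> S" "l2norm x = 1" "supp x \<subseteq> {k + 1 .. k + int N}"
  shows "lnu_loc N T S R \<le> l2norm (restr R (mv T x))"
  unfolding lnu_loc_def by (rule cInf_lower) (use assms in \<open>auto intro!: bdd_belowI[of _ 0]\<close>)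

lemma lnu_loc_greatest:
  assumes "p \<in> S" "N \<ge> 1"
    and "\<And>x k. is_l2 x \<Longrightarrow> supp x \<subseteq> S \<Longrightarrow> l2norm x = 1 \<Longrightarrow> supp x \<subseteq> {k + 1 .. k + int N} \<Longrightarrow>
      m \<le> l2norm (restr R (mv T x))"
  shows "m \<le> lnu_loc N T S R"
proof -
  have "supp (delta p) \<subseteq> {(p - 1) + 1 .. (p - 1) + int N}" using assms(2) delta_props(3) by simp
  with assms delta_props[of p] show ?thesis
    unfolding lnu_loc_def by (intro cInf_greatest) (auto intro!: exI[of _ "delta p"] exI[of _ "p - 1"])
qed

lemma restr_scale: "restr R (\<lambda>i. c * y i) = (\<lambda>i. c * restr R y i)"
  unfolding restr_def by auto

lemma lnu_set_mult_le:
  assumes "banded T w C" "is_l2 x" "supp x \<subseteq> S"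
  shows "lnu_set S T R * l2norm x \<le> l2norm (restr R (mv T x))"
proof (cases "l2norm x = 0")
  case False
  then have pos: "l2norm x > 0" using l2norm_nonneg[of x] by linarith
  define c where "c = complex_of_real (1 / l2norm x)"
  have c: "cmod c = 1 / l2norm x" unfolding c_def norm_of_real using pos by simp
  have Tx: "is_l2 (restr R (mv T x))" using l2_restr l2_mv[OF assms(1,2)] by blast
  have "lnu_set S T R \<le> l2norm (restr R (mv T (\<lambda>i. c * x i)))"
    using l2_scale[OF assms(2), of c] c pos assms(3) by (intro lnu_set_le) (auto simp: supp_def)
  also have "\<dots> = l2norm (restr R (mv T x)) / l2norm x"
    using l2_scale[OF Tx, of c] c unfolding mv_scale[OF assms(1)] restr_scale by simp
  finally show ?thesis using pos by (simp add: pos_le_divide_eq)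
qed simp

lemma finite_head_sections:
  "finite ({a} \<union> {lnu_set {int j .. int j + int N - 1} T natset | j. j \<in> {1..w}})"
  using finite_imageI[of "{1..w}" "\<lambda>j. lnu_set {int j .. int j + int N - 1} T natset"]
  by (auto simp: setcompr_eq_image)

lemma Min_head_sections_le_lnu_loc:
  assumes "banded T w C" "N \<ge> 1"
  shows "Min ({lnu_loc N T natset UNIV} \<union>
           {lnu_set {int j .. int j + int N - 1} T natset | j. j \<in> {1..w}})
         \<le> lnu_loc N T natset natset" (is "Min ?Q \<le> _")
proof (rule lnu_loc_greatest[OF _ assms(2)])
  show "1 \<in> natset" unfolding natset_def by simp
  fix x k assume x: "is_l2 x" "supp x \<subseteq> natset" "l2norm x = 1" "supp x \<subseteq> {k + 1 .. k + int N}"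
  define k0 where "k0 = max k 0"
  have supp_k0: "supp x \<subseteq> {k0 + 1 .. k0 + int N}"
    using x(2,4) assms(2) unfolding k0_def natset_def by (force simp: subset_iff)
  have Q: "finite ?Q" "?Q \<noteq> {}" using finite_head_sections by auto
  txt \<open>A section starting in one of the first \<open>w\<close> columns is one of the head sections; one
    starting further right is mapped by \<open>T\<close> into positive rows, so compressing loses nothing.\<close>
  show "Min ?Q \<le> l2norm (restr natset (mv T x))"
  proof (cases "k0 < int w")
    case True
    define j where "j = nat k0 + 1"
    have "j \<in> {1..w}" "supp x \<subseteq> {int j .. int j + int N - 1}"
      using True supp_k0 unfolding j_def k0_def by auto
    then show ?thesis
      using lnu_set_le[OF x(1) _ x(3)] Q by (auto simp: Min_le_iff)
  next
    case False
    have "supp x \<subseteq> {k0 + 1 ..}" using supp_k0 by auto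
    then have "supp (mv T x) \<subseteq> {k0 + 1 - int w ..}" by (rule supp_mv_subset[OF assms(1)])
    then have "supp (mv T x) \<subseteq> natset" using False unfolding natset_def by auto
    then have "restr natset (mv T x) = restr UNIV (mv T x)" by (simp add: restr_id)
    then show ?thesis
      using lnu_loc_le[OF x(1-3) supp_k0, of T UNIV] Q by (auto simp: Min_le_iff)
  qed
qed

theorem lnu_loc_natset_natset_eq_Min:
  assumes "banded T w C" "N \<ge> 1"
  shows "lnu_loc N T natset natset =
           Min ({lnu_loc N T natset UNIV} \<union>
                {lnu_set {int j .. int j + int N - 1} T natset | j. j \<in> {1..w}})"
    (is "?L = Min ?Q")
proof (rule antisym)
  have one: "1 \<in> natset" unfolding natset_def by simp
  have "?L \<le> lnu_loc N T natset UNIV"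
  proof (rule lnu_loc_greatest[OF one assms(2)])
    fix x k assume x: "is_l2 x" "supp x \<subseteq> natset" "l2norm x = 1" "supp x \<subseteq> {k + 1 .. k + int N}"
    have "?L \<le> l2norm (restr natset (mv T x))" by (rule lnu_loc_le[OF x])
    also have "\<dots> \<le> l2norm (restr UNIV (mv T x))"
      using l2_restr l2_mv[OF assms(1) x(1)] by (simp add: restr_def)
    finally show "?L \<le> l2norm (restr UNIV (mv T x))" .
  qed
  moreover have "?L \<le> lnu_set {int j .. int j + int N - 1} T natset" if j: "j \<in> {1..w}" for j
  proof (rule lnu_set_greatest[of "int j"])
    show "int j \<in> {int j .. int j + int N - 1}" using assms(2) by simp
    fix x assume x: "is_l2 x" "supp x \<subseteq> {int j .. int j + int N - 1}" "l2norm x = 1"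
    then show "?L \<le> l2norm (restr natset (mv T x))"
      using j by (intro lnu_loc_le[where k = "int j - 1"]) (auto simp: natset_def)
  qed
  ultimately show "?L \<le> Min ?Q" using finite_head_sections by auto
  show "Min ?Q \<le> ?L" by (rule Min_head_sections_le_lnu_loc[OF assms])
qed

section \<open>Translation of finite sections into the half line\<close>

text \<open>This is the form in which \<open>\<C>(A) = \<C>(A|\<^sub>\<nat>)\<close> is used (see \<open>csubs_windows_recur\<close>): every
  finite section of \<open>T\<close> together with its \<open>w\<close> neighbouring rows reappears, translated by \<open>s\<close>,
  so far to the right that all of its rows are positive.\<close>

definition windows_recur :: "mat \<Rightarrow> nat \<Rightarrow> bool" where
  "windows_recur T w \<longleftrightarrow> (\<forall>k (N::nat). \<exists>s. int w \<le> k + s \<and>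
     (\<forall>p\<in>{k + 1 - int w .. k + int N + int w}. \<forall>q\<in>{k + 1 - int w .. k + int N + int w}.
        T (p + s) (q + s) = T p q))"

definition col_section :: "mat \<Rightarrow> nat \<Rightarrow> nat \<Rightarrow> int \<Rightarrow> mat" where
  "col_section B w N k = (\<lambda>i j. if i \<in> {1 - int w .. int N + int w} \<and> j \<in> {1 .. int N}
     then B (k + i) (k + j) else 0)"

lemma csubs_col_section:
  "csubs B J w = {(N, col_section B w N k) | N k. N \<ge> 1 \<and> {k + 1 .. k + int N} \<subseteq> J}"
  unfolding csubs_def col_section_def ..

lemma csubs_windows_recur:
  assumes "csubs A UNIV w = csubs A natset w"
  shows "windows_recur A w"
  unfolding windows_recur_def
proof (intro allI)
  fix k and N :: nat
  define N' where "N' = N + 2 * w + 1"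
  define k' where "k' = k - int w"
  have "(N', col_section A w N' k') \<in> csubs A UNIV w"
    unfolding csubs_col_section by (intro CollectI exI[of _ N'] exI[of _ k']) (simp add: N'_def)
  then have "(N', col_section A w N' k') \<in> csubs A natset w" using assms by simp
  then obtain k'' where k'': "col_section A w N' k' = col_section A w N' k''"
    "{k'' + 1 .. k'' + int N'} \<subseteq> natset"
    unfolding csubs_col_section by auto
  have "k'' + 1 \<in> natset" using k''(2) unfolding N'_def by auto
  then have "int w \<le> k + (k'' - k')" unfolding k'_def natset_def by simp
  moreover have "A (p + (k'' - k')) (q + (k'' - k')) = A p q"
    if "p \<in> {k + 1 - int w .. k + int N + int w}" "q \<in> {k + 1 - int w .. k + int N + int w}" for p q
  proof -
    have "col_section A w N' k' (p - k') (q - k') = col_section A w N' k'' (p - k') (q - k')"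
      using k''(1) by simp
    moreover have "p - k' \<in> {1 - int w .. int N' + int w}" "q - k' \<in> {1 .. int N'}"
      using that unfolding k'_def N'_def by auto
    ultimately show ?thesis unfolding col_section_def by (simp add: algebra_simps)
  qed
  ultimately show "\<exists>s. int w \<le> k + s \<and>
     (\<forall>p\<in>{k + 1 - int w .. k + int N + int w}. \<forall>q\<in>{k + 1 - int w .. k + int N + int w}.
        A (p + s) (q + s) = A p q)" by blast
qed

lemma windows_recur_transfer:
  assumes "windows_recur T w"
    and "\<And>p q s. T (p + s) (q + s) = T p q \<Longrightarrow> T (q + s) (p + s) = T q p \<Longrightarrow> T' (p + s) (q + s) = T' p q"
  shows "windows_recur T' w"
  unfolding windows_recur_def
proof (intro allI)
  fix k and N :: nat
  obtain s where "int w \<le> k + s" "\<forall>p\<in>{k + 1 - int w .. k + int N + int w}.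
      \<forall>q\<in>{k + 1 - int w .. k + int N + int w}. T (p + s) (q + s) = T p q"
    using assms(1) unfolding windows_recur_def by blast
  then show "\<exists>s. int w \<le> k + s \<and> (\<forall>p\<in>{k + 1 - int w .. k + int N + int w}.
      \<forall>q\<in>{k + 1 - int w .. k + int N + int w}. T' (p + s) (q + s) = T' p q)"
    using assms(2) by blast
qed

lemma windows_recur_shiftm: "windows_recur A w \<Longrightarrow> windows_recur (shiftm A z) w"
  by (erule windows_recur_transfer) (simp add: shiftm_def)

lemma windows_recur_adj: "windows_recur T w \<Longrightarrow> windows_recur (adj T) w"
  by (erule windows_recur_transfer) (simp add: adj_def)

lemma Ts_windows_recur: "windows_recur A w \<Longrightarrow> T \<in> Ts A \<Longrightarrow> windows_recur T w"
  unfolding Ts_def using windows_recur_shiftm windows_recur_adj by blast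

lemma supp_translate:
  assumes "supp x \<subseteq> {k + 1 .. k + b}"
  shows "supp (\<lambda>i. x (i - s)) \<subseteq> {(k + s) + 1 .. (k + s) + b}"
  using assms unfolding supp_def by force

lemma mv_translate:
  assumes "banded T w C" "windows_recur T w" "supp x \<subseteq> {k + 1 .. k + int N}"
  obtains s where "int w \<le> k + s" "mv T (\<lambda>i. x (i - s)) = (\<lambda>i. mv T x (i - s))"
proof -
  let ?W = "{k + 1 - int w .. k + int N + int w}"
  let ?F = "{k + 1 .. k + int N}"
  obtain s where s: "int w \<le> k + s" "\<forall>p\<in>?W. \<forall>q\<in>?W. T (p + s) (q + s) = T p q"
    using assms(2) unfolding windows_recur_def by blast
  have "mv T (\<lambda>i. x (i - s)) i = mv T x (i - s)" for i
  proof -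
    have "mv T (\<lambda>i. x (i - s)) i = (\<Sum>j\<in>{(k + s) + 1 .. (k + s) + int N}. T i j * x (j - s))"
      by (rule mv_finite_support[OF _ supp_translate[OF assms(3)]]) simp
    also have "\<dots> = (\<Sum>j\<in>?F. T i (j + s) * x j)"
      by (rule sum.reindex_bij_witness[where i="\<lambda>j. j + s" and j="\<lambda>j. j - s"]) auto
    also have "\<dots> = (\<Sum>j\<in>?F. T (i - s) j * x j)"
    proof (rule sum.cong[OF refl])
      fix j assume j: "j \<in> ?F"
      show "T i (j + s) * x j = T (i - s) j * x j"
      proof (cases "i - s \<in> ?W")
        case True
        have "j \<in> ?W" using j by auto
        then have "T (i - s + s) (j + s) = T (i - s) j" using s(2) True by blast
        then show ?thesis by simp
      next
        case False
        then have "nat \<bar>(i - s) - j\<bar> > w" "nat \<bar>i - (j + s)\<bar> > w" using j by auto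
        then show ?thesis using banded_zero[OF assms(1)] by simp
      qed
    qed
    also have "\<dots> = mv T x (i - s)" by (rule mv_finite_support[symmetric, OF _ assms(3)]) simp
    finally show ?thesis .
  qed
  with s(1) show ?thesis by (intro that) auto
qed

lemma lnu_loc_natset_UNIV_eq:
  assumes "banded T w C" "windows_recur T w" "N \<ge> 1"
  shows "lnu_loc N T natset UNIV = lnu_loc N T UNIV UNIV"
proof (rule antisym)
  have one: "1 \<in> natset" unfolding natset_def by simp
  show "lnu_loc N T natset UNIV \<le> lnu_loc N T UNIV UNIV"
  proof (rule lnu_loc_greatest[OF _ assms(3)])
    fix x k assume x: "is_l2 x" "supp x \<subseteq> UNIV" "l2norm x = 1" "supp x \<subseteq> {k + 1 .. k + int N}"
    obtain s where s: "int w \<le> k + s" "mv T (\<lambda>i. x (i - s)) = (\<lambda>i. mv T x (i - s))"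
      using mv_translate[OF assms(1,2) x(4)] by blast
    have supp: "supp (\<lambda>i. x (i - s)) \<subseteq> {(k + s) + 1 .. (k + s) + int N}"
      by (rule supp_translate[OF x(4)])
    then have "supp (\<lambda>i. x (i - s)) \<subseteq> natset" using s(1) unfolding natset_def by auto
    then have "lnu_loc N T natset UNIV \<le> l2norm (restr UNIV (mv T (\<lambda>i. x (i - s))))"
      using x l2_shift[of x "- s"] supp by (intro lnu_loc_le) auto
    also have "\<dots> = l2norm (restr UNIV (mv T x))"
      using l2_shift[of "mv T x" "- s"] s(2) by simp
    finally show "lnu_loc N T natset UNIV \<le> l2norm (restr UNIV (mv T x))" .
  qed simp
  show "lnu_loc N T UNIV UNIV \<le> lnu_loc N T natset UNIV"
    using lnu_loc_le[of _ UNIV _ N T UNIV] by (intro lnu_loc_greatest[OF one assms(3)]) simp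
qed

lemma lnu_set_natset_mult_le:
  assumes "banded T w C" "windows_recur T w" "supp x \<subseteq> {k + 1 .. k + int N}"
  shows "lnu_set natset T natset * l2norm x \<le> l2norm (mv T x)"
proof -
  obtain s where s: "int w \<le> k + s" "mv T (\<lambda>i. x (i - s)) = (\<lambda>i. mv T x (i - s))"
    using mv_translate[OF assms] by blast
  let ?x = "\<lambda>i. x (i - s)"
  have x: "is_l2 ?x" "l2norm ?x = l2norm x"
    using l2_finite_support(1)[OF _ assms(3)] l2_shift[of x "- s"] by simp_all
  have "supp ?x \<subseteq> {(k + s) + 1 ..}" using supp_translate[OF assms(3), of s] by auto
  then have supp: "supp ?x \<subseteq> natset" "supp (mv T ?x) \<subseteq> natset"
    using supp_mv_subset[OF assms(1)] s(1) unfolding natset_def by force+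
  have "lnu_set natset T natset * l2norm x \<le> l2norm (restr natset (mv T ?x))"
    using lnu_set_mult_le[OF assms(1) x(1) supp(1)] x(2) by simp
  also have "\<dots> = l2norm (mv T x)"
    using restr_id[OF supp(2)] l2_shift[of "mv T x" "- s"] s(2) by simp
  finally show ?thesis .
qed

text \<open>Truncate a unit vector to a finite section and translate that section into the half line;
  the truncation error is controlled by the norm of \<open>T\<close>.\<close>

theorem lnu_set_natset_le_UNIV:
  assumes "banded T w C" "windows_recur T w"
  shows "lnu_set natset T natset \<le> lnu_set UNIV T UNIV"
proof (rule lnu_set_greatest[of 0])
  let ?\<nu> = "lnu_set natset T natset"
  define M where "M = (2 * real w + 1) * C"
  have M: "0 \<le> M" unfolding M_def using banded_nonneg[OF assms(1)] by simp
  have \<nu>: "0 \<le> ?\<nu>" by (rule lnu_set_nonneg[of 1]) (simp add: natset_def)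
  fix x assume x: "is_l2 x" "supp x \<subseteq> UNIV" "l2norm x = 1"
  show "?\<nu> \<le> l2norm (restr UNIV (mv T x))"
  proof (rule field_le_epsilon)
    fix e :: real assume e: "0 < e"
    define \<delta> where "\<delta> = e / (?\<nu> + M + 1)"
    have \<delta>: "0 < \<delta>" "(?\<nu> + M) * \<delta> \<le> e"
      using e \<nu> M unfolding \<delta>_def by (auto simp: field_simps)
    obtain n :: nat where n: "l2norm (\<lambda>i. x i - restr {- int n .. int n} x i) \<le> \<delta>"
      using l2_tail[OF x(1) \<delta>(1)] by blast
    define xn where "xn = restr {- int n .. int n} x"
    define r where "r = (\<lambda>i. x i - xn i)"
    have r: "is_l2 r" "l2norm r \<le> \<delta>" "x = (\<lambda>i. xn i + r i)" "xn = (\<lambda>i. x i - r i)"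
      unfolding r_def xn_def using n l2_restr[OF x(1)] l2_diff[OF x(1)] by auto
    have supp: "supp xn \<subseteq> {(- int n - 1) + 1 .. (- int n - 1) + int (2 * n + 1)}"
      unfolding xn_def supp_def restr_def by auto
    have xn: "is_l2 xn" using l2_finite_support(1)[OF _ supp] by simp
    have "1 - \<delta> \<le> l2norm xn" using l2_add[OF xn r(1)] r(2,3) x(3) by simp
    then have "?\<nu> * (1 - \<delta>) \<le> ?\<nu> * l2norm xn" using \<nu> by (rule mult_left_mono)
    also have "\<dots> \<le> l2norm (mv T xn)" by (rule lnu_set_natset_mult_le[OF assms supp])
    also have "\<dots> \<le> l2norm (mv T x) + l2norm (mv T r)"
      using l2_diff[OF conjunct1[OF l2_mv[OF assms(1) x(1)]] conjunct1[OF l2_mv[OF assms(1) r(1)]]]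
      unfolding r(4) mv_diff[OF assms(1)] by simp
    also have "l2norm (mv T r) \<le> M * \<delta>"
      using l2_mv[OF assms(1) r(1)] r(2) M unfolding M_def by (meson mult_left_mono order_trans)
    finally show "?\<nu> \<le> l2norm (restr UNIV (mv T x)) + e" using \<delta>(2) by (simp add: algebra_simps)
  qed
qed simp

section \<open>Inner product and adjoint\<close>

definition ip :: "vec \<Rightarrow> vec \<Rightarrow> complex" where
  "ip u v = (\<Sum>\<^sub>\<infinity>i. u i * cnj (v i))"

lemma ip_abs_summable:
  assumes "is_l2 u" "is_l2 v"
  shows "(\<lambda>i. norm (u i * cnj (v i))) summable_on UNIV"
    "(\<Sum>\<^sub>\<infinity>i. norm (u i * cnj (v i))) \<le> l2norm u * l2norm v"
proof -
  have finite_le: "(\<Sum>i\<in>F. norm (u i * cnj (v i))) \<le> l2norm u * l2norm v" if "finite F" for F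
  proof -
    have "(\<Sum>i\<in>F. norm (u i * cnj (v i))) = (\<Sum>i\<in>F. \<bar>cmod (u i)\<bar> * \<bar>cmod (v i)\<bar>)"
      by (simp add: norm_mult)
    also have "\<dots> \<le> L2_set (\<lambda>i. cmod (u i)) F * L2_set (\<lambda>i. cmod (v i)) F"
      by (rule L2_set_mult_ineq)
    also have "\<dots> \<le> l2norm u * l2norm v"
      using L2_set_le_l2norm[OF assms(1) that] L2_set_le_l2norm[OF assms(2) that]
      by (intro mult_mono) (auto simp: L2_set_def sum_nonneg)
    finally show ?thesis .
  qed
  show summable: "(\<lambda>i. norm (u i * cnj (v i))) summable_on UNIV"
    by (rule nonneg_bdd_above_summable_on) (use finite_le in \<open>auto intro!: bdd_aboveI2\<close>)
  show "(\<Sum>\<^sub>\<infinity>i. norm (u i * cnj (v i))) \<le> l2norm u * l2norm v"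
    using summable finite_le by (intro infsum_le_finite_sums) auto
qed

lemma ip_summable:
  assumes "is_l2 u" "is_l2 v"
  shows "(\<lambda>i. u i * cnj (v i)) summable_on UNIV"
  by (rule abs_summable_summable[OF ip_abs_summable(1)[OF assms]])

lemma norm_ip_le:
  assumes "is_l2 u" "is_l2 v"
  shows "cmod (ip u v) \<le> l2norm u * l2norm v"
  unfolding ip_def using norm_infsum_bound[OF ip_abs_summable(1)[OF assms]] ip_abs_summable(2)[OF assms]
  by linarith

lemma Re_ip_self:
  assumes "is_l2 u"
  shows "Re (ip u u) = (l2norm u)^2"
proof -
  have "Re (ip u u) = (\<Sum>\<^sub>\<infinity>i. Re (u i * cnj (u i)))"
    unfolding ip_def using infsum_Re[OF ip_summable[OF assms assms]] by simp
  also have "\<dots> = (\<Sum>\<^sub>\<infinity>i. (cmod (u i))^2)"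
    by (rule infsum_cong) (unfold cmod_power2, simp add: power2_eq_square)
  finally show ?thesis unfolding l2norm_power2 .
qed

lemma l2norm_diff_power2:
  assumes "is_l2 a" "is_l2 b"
  shows "(l2norm (\<lambda>i. a i - b i))^2 = (l2norm a)^2 - 2 * Re (ip b a) + (l2norm b)^2"
proof -
  have "((\<lambda>i. (cmod (a i))^2 + (-2) * Re (b i * cnj (a i)) + (cmod (b i))^2) has_sum
      ((l2norm a)^2 + (-2) * Re (ip b a) + (l2norm b)^2)) UNIV"
    using assms ip_summable[OF assms(2,1)] unfolding is_l2_def l2norm_power2 ip_def
    by (intro has_sum_add has_sum_cmult_right has_sum_Re)
      (auto simp: summable_iff_has_sum_infsum[symmetric])
  moreover have "(cmod (a i))^2 + (-2) * Re (b i * cnj (a i)) + (cmod (b i))^2 = (cmod (a i - b i))^2" for i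
    unfolding cmod_power2 by (simp add: power2_eq_square algebra_simps)
  ultimately show ?thesis unfolding l2norm_power2 by (simp add: infsumI)
qed

lemma ip_scale_left: "ip (\<lambda>i. c * u i) v = c * ip u v"
  unfolding ip_def by (simp add: mult.assoc infsum_cmult_right')

lemma has_sum_finite_sum:
  fixes f :: "'d \<Rightarrow> 'a \<Rightarrow> complex"
  assumes "finite D" "\<And>d. d \<in> D \<Longrightarrow> (f d has_sum s d) A"
  shows "((\<lambda>i. \<Sum>d\<in>D. f d i) has_sum (\<Sum>d\<in>D. s d)) A"
  using assms by (induction D rule: finite_induct) (auto intro!: has_sum_add)

lemma ip_sum_left:
  assumes "finite D" "\<And>d. d \<in> D \<Longrightarrow> is_l2 (a d)" "is_l2 v"
  shows "ip (\<lambda>i. \<Sum>d\<in>D. a d i) v = (\<Sum>d\<in>D. ip (a d) v)"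
proof -
  have "((\<lambda>i. \<Sum>d\<in>D. a d i * cnj (v i)) has_sum (\<Sum>d\<in>D. ip (a d) v)) UNIV"
    using assms ip_summable unfolding ip_def
    by (intro has_sum_finite_sum) (auto simp: summable_iff_has_sum_infsum[symmetric])
  then show ?thesis unfolding ip_def by (simp add: infsumI sum_distrib_right)
qed

lemma ip_sum_right:
  assumes "finite D" "\<And>d. d \<in> D \<Longrightarrow> is_l2 (b d)" "is_l2 u"
  shows "ip u (\<lambda>i. \<Sum>d\<in>D. b d i) = (\<Sum>d\<in>D. ip u (b d))"
proof -
  have "((\<lambda>i. \<Sum>d\<in>D. u i * cnj (b d i)) has_sum (\<Sum>d\<in>D. ip u (b d))) UNIV"
    using assms ip_summable unfolding ip_def
    by (intro has_sum_finite_sum) (auto simp: summable_iff_has_sum_infsum[symmetric])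
  then show ?thesis unfolding ip_def by (simp add: infsumI sum_distrib_left)
qed

lemma ip_restr_left: "(\<And>i. i \<notin> S \<Longrightarrow> v i = 0) \<Longrightarrow> ip (restr S u) v = ip u v"
  unfolding ip_def restr_def by (rule infsum_cong) auto

lemma ip_restr_right: "(\<And>i. i \<notin> S \<Longrightarrow> u i = 0) \<Longrightarrow> ip u (restr S v) = ip u v"
  unfolding ip_def restr_def by (rule infsum_cong) auto

lemma ip_mv_adj:
  assumes T: "banded T w C" and u: "is_l2 u" and v: "is_l2 v"
  shows "ip (mv T u) v = ip u (mv (adj T) v)"
proof -
  let ?D = "{- int w .. int w}"
  define a where "a d = (\<lambda>i. T i (i + d) * u (i + d))" for d
  define b where "b d = (\<lambda>i. adj T i (i + d) * v (i + d))" for d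
  have "mv T u = (\<lambda>i. \<Sum>d\<in>?D. a d i)" "mv (adj T) v = (\<lambda>i. \<Sum>d\<in>?D. b d i)"
    unfolding a_def b_def using mv_banded[OF T] mv_banded[OF banded_adj[OF T]] by auto
  moreover have "is_l2 (a d)" "is_l2 (b d)" for d
    unfolding a_def b_def using l2_diagonal[OF T u] l2_diagonal[OF banded_adj[OF T] v] by auto
  ultimately have sums: "ip (mv T u) v = (\<Sum>d\<in>?D. ip (a d) v)"
      "ip u (mv (adj T) v) = (\<Sum>d\<in>?D. ip u (b d))"
    using ip_sum_left[of ?D a v] ip_sum_right[of ?D b u] u v by simp_all
  have "(\<Sum>d\<in>?D. ip u (b d)) = (\<Sum>d\<in>?D. ip u (b (- d)))"
    by (rule sum.reindex_bij_witness[where i="\<lambda>d. - d" and j="\<lambda>d. - d"]) auto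
  moreover have "ip (a d) v = ip u (b (- d))" for d
  proof -
    have "bij_betw (\<lambda>i. i - d) UNIV UNIV"
      by (rule bij_betw_byWitness[where f'="\<lambda>i. i + d"]) auto
    then have "ip (a d) v = (\<Sum>\<^sub>\<infinity>i. a d (i - d) * cnj (v (i - d)))"
      unfolding ip_def using infsum_reindex_bij_betw[of "\<lambda>i. i - d" UNIV UNIV "\<lambda>i. a d i * cnj (v i)"]
      by simp
    also have "\<dots> = ip u (b (- d))" unfolding ip_def a_def b_def adj_def
      by (rule infsum_cong) (simp add: algebra_simps)
    finally show ?thesis .
  qed
  ultimately show ?thesis using sums by simp
qed

section \<open>The complete metric space \<open>L2on S\<close> and the bounded inverse theorem\<close>

lemma L2on_D: "x \<in> L2on S \<Longrightarrow> is_l2 x" "x \<in> L2on S \<Longrightarrow> i \<notin> S \<Longrightarrow> x i = 0"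
  unfolding L2on_def supp_def by (auto simp: subset_iff)

lemma L2on_I: "is_l2 x \<Longrightarrow> (\<And>i. i \<notin> S \<Longrightarrow> x i = 0) \<Longrightarrow> x \<in> L2on S"
  unfolding L2on_def supp_def by (auto simp: subset_iff)

lemma L2on_UNIV: "L2on UNIV = {x. is_l2 x}"
  unfolding L2on_def by simp

lemma L2on_zero: "(\<lambda>i. 0) \<in> L2on S"
  by (rule L2on_I) simp_all

lemma delta_L2on: "p \<in> S \<Longrightarrow> delta p \<in> L2on S"
  unfolding L2on_def using delta_props by simp

lemma L2on_add:
  assumes "x \<in> L2on S" "y \<in> L2on S" shows "(\<lambda>i. x i + y i) \<in> L2on S"
  using l2_add[OF L2on_D(1)[OF assms(1)] L2on_D(1)[OF assms(2)]]
    L2on_D(2)[OF assms(1)] L2on_D(2)[OF assms(2)] by (auto intro!: L2on_I)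

lemma L2on_diff:
  assumes "x \<in> L2on S" "y \<in> L2on S" shows "(\<lambda>i. x i - y i) \<in> L2on S"
  using l2_diff[OF L2on_D(1)[OF assms(1)] L2on_D(1)[OF assms(2)]]
    L2on_D(2)[OF assms(1)] L2on_D(2)[OF assms(2)] by (auto intro!: L2on_I)

lemma L2on_scale: "x \<in> L2on S \<Longrightarrow> (\<lambda>i. c * x i) \<in> L2on S"
  using l2_scale[of x c] unfolding L2on_def supp_def by (auto simp: subset_iff)

lemma opS_UNIV [simp]: "opS T UNIV = mv T"
  unfolding opS_def by simp

lemma opS_L2on: "banded T w C \<Longrightarrow> x \<in> L2on S \<Longrightarrow> opS T S x \<in> L2on S"
  unfolding opS_def using l2_restr l2_mv by (auto intro!: L2on_I dest: L2on_D simp: restr_def)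

lemma opS_diff: "banded T w C \<Longrightarrow> opS T S (\<lambda>i. x i - y i) = (\<lambda>i. opS T S x i - opS T S y i)"
  unfolding opS_def by (auto simp: mv_diff restr_def)

lemma opS_scale: "banded T w C \<Longrightarrow> opS T S (\<lambda>i. c * x i) = (\<lambda>i. c * opS T S x i)"
  unfolding opS_def by (auto simp: mv_scale restr_def)

lemma opS_zero [simp]: "opS T S (\<lambda>i. 0) = (\<lambda>i. 0)"
  unfolding opS_def restr_def by auto

definition l2_dist :: "vec \<Rightarrow> vec \<Rightarrow> real" where
  "l2_dist x y = l2norm (\<lambda>i. x i - y i)"

lemma l2_metric: "Metric_space (L2on S) l2_dist"
proof
  fix x y z
  show "0 \<le> l2_dist x y" unfolding l2_dist_def by simp
  show "l2_dist x y = l2_dist y x" unfolding l2_dist_def by (rule l2_cong) (simp add: norm_minus_commute)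
  assume x: "x \<in> L2on S" and y: "y \<in> L2on S"
  have "is_l2 (\<lambda>i. x i - y i)" using l2_diff L2on_D(1)[OF x] L2on_D(1)[OF y] by blast
  then show "l2_dist x y = 0 \<longleftrightarrow> x = y"
    unfolding l2_dist_def by (simp add: l2norm_eq_0_iff fun_eq_iff)
  assume z: "z \<in> L2on S"
  have "is_l2 (\<lambda>i. x i - y i)" "is_l2 (\<lambda>i. y i - z i)"
    using l2_diff L2on_D(1)[OF x] L2on_D(1)[OF y] L2on_D(1)[OF z] by blast+
  from l2_add[OF this] show "l2_dist x z \<le> l2_dist x y + l2_dist y z"
    unfolding l2_dist_def by simp
qed

lemma l2_limit_bound:
  assumes lim: "\<And>i. (\<lambda>k. z k i) \<longlonglongrightarrow> z' i"
    and bound: "\<And>k. k \<ge> K \<Longrightarrow> is_l2 (z k) \<and> l2norm (z k) \<le> B" and "0 \<le> B"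
  shows "is_l2 z' \<and> l2norm z' \<le> B"
proof (rule l2_boundI[OF \<open>0 \<le> B\<close>])
  fix F :: "int set" assume F: "finite F"
  have "(\<lambda>k. \<Sum>i\<in>F. (cmod (z k i))^2) \<longlonglongrightarrow> (\<Sum>i\<in>F. (cmod (z' i))^2)"
    by (intro tendsto_sum tendsto_power tendsto_norm lim)
  moreover have "\<exists>N. \<forall>k\<ge>N. (\<Sum>i\<in>F. (cmod (z k i))^2) \<le> B^2"
  proof (intro exI allI impI)
    fix k assume "K \<le> k"
    then have "is_l2 (z k)" "l2norm (z k) \<le> B" using bound by auto
    then show "(\<Sum>i\<in>F. (cmod (z k i))^2) \<le> B^2"
      using sum_power2_le_l2norm[OF _ F, of "z k"] power_mono[of "l2norm (z k)" B 2] by auto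
  qed
  ultimately show "(\<Sum>i\<in>F. (cmod (z' i))^2) \<le> B^2" by (rule LIMSEQ_le_const2)
qed

lemma l2_Cauchy_limit:
  assumes l2: "\<And>n. is_l2 (\<sigma> n)"
    and cauchy: "\<And>e. e > 0 \<Longrightarrow> \<exists>N. \<forall>n n'. N \<le> n \<longrightarrow> N \<le> n' \<longrightarrow> l2_dist (\<sigma> n) (\<sigma> n') < e"
  obtains x where "\<And>i. (\<lambda>n. \<sigma> n i) \<longlonglongrightarrow> x i"
    and "\<And>e. e > 0 \<Longrightarrow> \<exists>N. \<forall>n\<ge>N. is_l2 (\<lambda>i. \<sigma> n i - x i) \<and> l2norm (\<lambda>i. \<sigma> n i - x i) \<le> e"
proof -
  have coord: "cmod (\<sigma> n i - \<sigma> m i) \<le> l2_dist (\<sigma> n) (\<sigma> m)" for n m i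
    unfolding l2_dist_def using norm_le_l2norm l2_diff[OF l2 l2] by blast
  have "Cauchy (\<lambda>n. \<sigma> n i)" for i
  proof (rule CauchyI)
    fix e :: real assume "e > 0"
    then obtain N where "\<forall>n n'. N \<le> n \<longrightarrow> N \<le> n' \<longrightarrow> l2_dist (\<sigma> n) (\<sigma> n') < e"
      using cauchy by blast
    then show "\<exists>M. \<forall>m\<ge>M. \<forall>n\<ge>M. cmod (\<sigma> m i - \<sigma> n i) < e"
      using coord le_less_trans by blast
  qed
  then have "convergent (\<lambda>n. \<sigma> n i)" for i by (simp add: Cauchy_convergent_iff)
  then obtain x where lim: "\<And>i. (\<lambda>n. \<sigma> n i) \<longlonglongrightarrow> x i"
    unfolding convergent_def by metis
  have near: "\<exists>N. \<forall>n\<ge>N. is_l2 (\<lambda>i. \<sigma> n i - x i) \<and> l2norm (\<lambda>i. \<sigma> n i - x i) \<le> e"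
    if "e > 0" for e
  proof -
    obtain N where N: "\<forall>n n'. N \<le> n \<longrightarrow> N \<le> n' \<longrightarrow> l2_dist (\<sigma> n) (\<sigma> n') < e"
      using cauchy \<open>e > 0\<close> by blast
    have "is_l2 (\<lambda>i. \<sigma> n i - x i) \<and> l2norm (\<lambda>i. \<sigma> n i - x i) \<le> e" if "N \<le> n" for n
    proof (rule l2_limit_bound[where z = "\<lambda>k i. \<sigma> n i - \<sigma> k i" and K = N])
      show "(\<lambda>k. \<sigma> n i - \<sigma> k i) \<longlonglongrightarrow> \<sigma> n i - x i" for i by (intro tendsto_intros lim)
      show "is_l2 (\<lambda>i. \<sigma> n i - \<sigma> k i) \<and> l2norm (\<lambda>i. \<sigma> n i - \<sigma> k i) \<le> e" if "N \<le> k" for k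
        using N \<open>N \<le> n\<close> that l2_diff[OF l2 l2, of n k] unfolding l2_dist_def by force
    qed (use \<open>e > 0\<close> in simp)
    then show ?thesis by blast
  qed
  show ?thesis by (rule that[OF lim near])
qed

lemma L2on_coordinate_limit:
  assumes "\<And>n. \<sigma> n \<in> L2on S" "(\<lambda>n. \<sigma> n i) \<longlonglongrightarrow> x i" "i \<notin> S"
  shows "x i = 0"
  using assms(2) L2on_D(2)[OF assms(1,3)] LIMSEQ_unique[OF _ tendsto_const] by fastforce

lemma l2_complete: "Metric_space.mcomplete (L2on S) l2_dist"
proof -
  interpret M: Metric_space "L2on S" l2_dist by (rule l2_metric)
  show ?thesis unfolding M.mcomplete_def
  proof (intro allI impI)
    fix \<sigma> assume "M.MCauchy \<sigma>"
    then have \<sigma>: "\<And>n. \<sigma> n \<in> L2on S"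
      and cauchy: "\<And>e. e > 0 \<Longrightarrow> \<exists>N. \<forall>n n'. N \<le> n \<longrightarrow> N \<le> n' \<longrightarrow> l2_dist (\<sigma> n) (\<sigma> n') < e"
      unfolding M.MCauchy_def by auto
    obtain x where lim: "\<And>i. (\<lambda>n. \<sigma> n i) \<longlonglongrightarrow> x i"
      and near: "\<And>e. e > 0 \<Longrightarrow> \<exists>N. \<forall>n\<ge>N. is_l2 (\<lambda>i. \<sigma> n i - x i) \<and> l2norm (\<lambda>i. \<sigma> n i - x i) \<le> e"
      using l2_Cauchy_limit[OF L2on_D(1)[OF \<sigma>] cauchy] by blast
    obtain N1 where "is_l2 (\<lambda>i. \<sigma> N1 i - x i)" using near[of 1] by auto
    then have "is_l2 (\<lambda>i. \<sigma> N1 i - (\<sigma> N1 i - x i))" using l2_diff L2on_D(1)[OF \<sigma>] by blast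
    moreover have "x i = 0" if "i \<notin> S" for i using \<sigma> lim that by (rule L2on_coordinate_limit)
    ultimately have "x \<in> L2on S" by (auto intro: L2on_I)
    moreover have "\<forall>\<^sub>F n in sequentially. \<sigma> n \<in> L2on S \<and> l2_dist (\<sigma> n) x < e" if "e > 0" for e
    proof -
      obtain N where "\<forall>n\<ge>N. is_l2 (\<lambda>i. \<sigma> n i - x i) \<and> l2norm (\<lambda>i. \<sigma> n i - x i) \<le> e / 2"
        using near[of "e / 2"] \<open>e > 0\<close> by auto
      then show ?thesis
        unfolding eventually_sequentially l2_dist_def using \<sigma> \<open>e > 0\<close> by force
    qed
    ultimately show "\<exists>x. limitin M.mtopology \<sigma> x sequentially" unfolding M.limitin_metric by blast
  qed
qed

lemma bounded_coordinates_convergent_subseq: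
  fixes x :: "nat \<Rightarrow> int \<Rightarrow> complex"
  assumes "\<And>k i. cmod (x k i) \<le> B"
  obtains r where "strict_mono r" "\<And>i. convergent (\<lambda>k. x (r k) i)"
proof -
  interpret subseqs "\<lambda>n s. convergent (\<lambda>k. x (s k) (from_nat n))"
  proof
    fix n and s :: "nat \<Rightarrow> nat"
    have "bounded (range (\<lambda>k. x (s k) (from_nat n)))"
      unfolding bounded_iff using assms by blast
    then obtain l r where "strict_mono (r :: nat \<Rightarrow> nat)" "((\<lambda>k. x (s k) (from_nat n)) \<circ> r) \<longlonglongrightarrow> l"
      using bounded_imp_convergent_subsequence by blast
    then show "\<exists>r'. strict_mono r' \<and> convergent (\<lambda>k. x ((s \<circ> r') k) (from_nat n))"
      by (auto simp: convergent_def o_def)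
  qed
  have "convergent (\<lambda>k. x (diagseq k) (from_nat n))" for n
  proof -
    have "convergent (\<lambda>k. x ((diagseq \<circ> (+) (Suc n)) k) (from_nat n))"
    proof (rule diagseq_holds)
      fix r s n assume "strict_mono (r :: nat \<Rightarrow> nat)" "convergent (\<lambda>k. x (s k) (from_nat n))"
      then show "convergent (\<lambda>k. x ((s \<circ> r) k) (from_nat n))"
        using convergent_subseq_convergent[of "\<lambda>k. x (s k) (from_nat n)" r] by (simp add: o_def)
    qed
    then show ?thesis
      using LIMSEQ_offset[of "\<lambda>k. x (diagseq k) (from_nat n)" "Suc n"]
      by (auto simp: convergent_def o_def add.commute)
  qed
  then have "convergent (\<lambda>k. x (diagseq k) i)" for i
    using from_nat_to_nat[of i] by metis
  with subseq_diagseq show ?thesis by (rule that)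
qed

lemma limitin_l2_coordinate:
  assumes "limitin (Metric_space.mtopology (L2on S) l2_dist) \<sigma> l sequentially"
  shows "(\<lambda>k. \<sigma> k i) \<longlonglongrightarrow> l i"
proof (rule tendstoI)
  interpret M: Metric_space "L2on S" l2_dist by (rule l2_metric)
  fix e :: real assume "e > 0"
  have l: "l \<in> L2on S" using assms unfolding M.limitin_metric by auto
  have "\<forall>\<^sub>F k in sequentially. \<sigma> k \<in> L2on S \<and> l2_dist (\<sigma> k) l < e"
    using assms \<open>e > 0\<close> unfolding M.limitin_metric by auto
  then show "\<forall>\<^sub>F k in sequentially. dist (\<sigma> k i) (l i) < e"
  proof (rule eventually_mono)
    fix k assume k: "\<sigma> k \<in> L2on S \<and> l2_dist (\<sigma> k) l < e"
    then have "is_l2 (\<lambda>i. \<sigma> k i - l i)" using l2_diff L2on_D(1) l by blast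
    then have "cmod (\<sigma> k i - l i) \<le> l2_dist (\<sigma> k) l" unfolding l2_dist_def by (rule norm_le_l2norm)
    then show "dist (\<sigma> k i) (l i) < e" using k by (simp add: dist_norm)
  qed
qed

lemma closedin_opS_image:
  assumes T: "banded T w C"
  shows "closedin (Metric_space.mtopology (L2on S) l2_dist) (opS T S ` {x \<in> L2on S. l2norm x \<le> B})"
proof -
  interpret M: Metric_space "L2on S" l2_dist by (rule l2_metric)
  let ?E = "opS T S ` {x \<in> L2on S. l2norm x \<le> B}"
  show ?thesis unfolding M.metric_closedin_iff_sequentially_closed
  proof (intro conjI allI impI)
    show "?E \<subseteq> L2on S" using opS_L2on[OF T] by blast
    fix \<sigma> l assume "range \<sigma> \<subseteq> ?E \<and> limitin M.mtopology \<sigma> l sequentially"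
    then have \<sigma>: "range \<sigma> \<subseteq> ?E" and lim: "limitin M.mtopology \<sigma> l sequentially" by auto
    obtain xs where xs: "\<And>k. xs k \<in> L2on S" "\<And>k. l2norm (xs k) \<le> B" "\<And>k. opS T S (xs k) = \<sigma> k"
      using \<sigma> by (simp add: image_subset_iff image_iff) metis
    have "cmod (xs k i) \<le> B" for k i
      using norm_le_l2norm[OF L2on_D(1)[OF xs(1)]] xs(2) order_trans by blast
    then obtain r where r: "strict_mono r" "\<And>i. convergent (\<lambda>k. xs (r k) i)"
      using bounded_coordinates_convergent_subseq[of xs B] by blast
    then obtain x where x: "\<And>i. (\<lambda>k. xs (r k) i) \<longlonglongrightarrow> x i"
      unfolding convergent_def by metis
    have "0 \<le> B" using xs(2)[of 0] l2norm_nonneg[of "xs 0"] by linarith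
    then have "is_l2 x \<and> l2norm x \<le> B"
      using L2on_D(1)[OF xs(1)] xs(2)
      by (intro l2_limit_bound[where z = "\<lambda>k. xs (r k)" and K = 0, OF x]) auto
    moreover have "x i = 0" if "i \<notin> S" for i
      using xs(1) x that by (rule L2on_coordinate_limit[of "\<lambda>k. xs (r k)"])
    ultimately have xS: "x \<in> {x \<in> L2on S. l2norm x \<le> B}" by (auto intro: L2on_I)
    have "opS T S x = l"
    proof
      fix i
      have "(\<lambda>k. opS T S (xs (r k)) i) \<longlonglongrightarrow> opS T S x i"
        unfolding opS_def restr_def mv_banded[OF T]
        by (cases "i \<in> S") (auto intro!: tendsto_sum tendsto_mult_left x)
      moreover have "(\<lambda>k. \<sigma> k i) \<longlonglongrightarrow> l i" by (rule limitin_l2_coordinate[OF lim])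
      then have "(\<lambda>k. opS T S (xs (r k)) i) \<longlonglongrightarrow> l i"
        using LIMSEQ_subseq_LIMSEQ[OF _ r(1)] xs(3) by (simp add: o_def)
      ultimately show "opS T S x i = l i" using LIMSEQ_unique by blast
    qed
    with xS show "l \<in> ?E" by blast
  qed
qed

definition inverse_bounded :: "mat \<Rightarrow> int set \<Rightarrow> real \<Rightarrow> bool" where
  "inverse_bounded T S c \<longleftrightarrow> (\<forall>x\<in>L2on S. l2norm x \<le> c * l2norm (opS T S x))"

lemma inverse_bounded_if_sphere:
  assumes T: "banded T w C" and inj: "inj_on (opS T S) (L2on S)" and "0 < \<rho>"
    and sphere: "\<And>x. x \<in> L2on S \<Longrightarrow> l2norm (opS T S x) = \<rho> \<Longrightarrow> l2norm x \<le> c * \<rho>"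
  shows "inverse_bounded T S c"
  unfolding inverse_bounded_def
proof
  fix x assume x: "x \<in> L2on S"
  have Sx: "opS T S x \<in> L2on S" by (rule opS_L2on[OF T x])
  show "l2norm x \<le> c * l2norm (opS T S x)"
  proof (cases "opS T S x = (\<lambda>i. 0)")
    case True
    then have "x = (\<lambda>i. 0)" using inj_onD[OF inj _ x L2on_zero] by simp
    then show ?thesis by simp
  next
    case False
    then have pos: "0 < l2norm (opS T S x)"
      using l2norm_eq_0_iff[OF L2on_D(1)[OF Sx]] l2norm_nonneg[of "opS T S x"] by linarith
    define t where "t = \<rho> / l2norm (opS T S x)"
    have "0 < t" unfolding t_def using pos \<open>0 < \<rho>\<close> by simp
    then have t: "cmod (complex_of_real t) = t" by simp
    have "l2norm (opS T S (\<lambda>i. complex_of_real t * x i)) = t * l2norm (opS T S x)"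
      unfolding opS_scale[OF T] using l2_scale[OF L2on_D(1)[OF Sx]] t by simp
    also have "\<dots> = \<rho>" unfolding t_def using pos by simp
    finally have "l2norm (\<lambda>i. complex_of_real t * x i) \<le> c * \<rho>" using sphere L2on_scale[OF x] by blast
    then have "t * l2norm x \<le> c * \<rho>" using l2_scale[OF L2on_D(1)[OF x]] t by simp
    then show ?thesis using pos \<open>0 < \<rho>\<close> unfolding t_def by (simp add: field_simps)
  qed
qed

lemma inverse_bounded_if_ball_in_image:
  assumes T: "banded T w C" and inj: "inj_on (opS T S) (L2on S)"
    and y0: "y0 \<in> L2on S" and "0 < r"
    and ball: "Metric_space.mball (L2on S) l2_dist y0 r \<subseteq> opS T S ` {x \<in> L2on S. l2norm x \<le> B}"
  shows "inverse_bounded T S (4 * B / r)"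
proof (rule inverse_bounded_if_sphere[OF T inj, of "r / 2"])
  interpret M: Metric_space "L2on S" l2_dist by (rule l2_metric)
  fix x assume x: "x \<in> L2on S" and norm: "l2norm (opS T S x) = r / 2"
  let ?y = "opS T S x"
  have "l2_dist y0 (\<lambda>i. y0 i + ?y i) < r"
    unfolding l2_dist_def using l2_cong(2)[of "\<lambda>i. - ?y i" ?y] norm \<open>0 < r\<close> by simp
  then have "y0 \<in> M.mball y0 r" "(\<lambda>i. y0 i + ?y i) \<in> M.mball y0 r"
    using y0 L2on_add[OF y0 opS_L2on[OF T x]] \<open>0 < r\<close> by simp_all
  then have "y0 \<in> opS T S ` {x \<in> L2on S. l2norm x \<le> B}"
    "(\<lambda>i. y0 i + ?y i) \<in> opS T S ` {x \<in> L2on S. l2norm x \<le> B}"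
    using ball by blast+
  then obtain x0 x1 where x0: "x0 \<in> L2on S" "l2norm x0 \<le> B" "opS T S x0 = y0"
    and x1: "x1 \<in> L2on S" "l2norm x1 \<le> B" "opS T S x1 = (\<lambda>i. y0 i + ?y i)"
    by (auto simp: image_iff)
  have "opS T S (\<lambda>i. x1 i - x0 i) = ?y" unfolding opS_diff[OF T] x0(3) x1(3) by simp
  then have "x = (\<lambda>i. x1 i - x0 i)" using inj_onD[OF inj _ L2on_diff[OF x1(1) x0(1)] x] by simp
  then have "l2norm x \<le> 2 * B"
    using l2_diff[OF L2on_D(1)[OF x1(1)] L2on_D(1)[OF x0(1)]] x0(2) x1(2) by simp
  then show "l2norm x \<le> 4 * B / r * (r / 2)" using \<open>0 < r\<close> by simp
qed (use \<open>0 < r\<close> in simp)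

theorem invertible_on_inverse_bounded:
  assumes T: "banded T w C" and inv: "invertible_on T S"
  obtains c where "inverse_bounded T S c"
proof -
  interpret M: Metric_space "L2on S" l2_dist by (rule l2_metric)
  define E where "E n = opS T S ` {x \<in> L2on S. l2norm x \<le> real n}" for n :: nat
  have bij: "bij_betw (opS T S) (L2on S) (L2on S)" using inv unfolding invertible_on_def .
  have closed: "closedin M.mtopology (E n)" for n
    unfolding E_def by (rule closedin_opS_image[OF T])
  have cover: "\<Union>(range E) = L2on S"
  proof
    show "\<Union>(range E) \<subseteq> L2on S" unfolding E_def using opS_L2on[OF T] by blast
    show "L2on S \<subseteq> \<Union>(range E)"
    proof
      fix y assume "y \<in> L2on S"
      then obtain x where "x \<in> L2on S" "y = opS T S x" using bij by (auto simp: bij_betw_def)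
      then have "y \<in> E (nat \<lceil>l2norm x\<rceil>)" unfolding E_def using real_nat_ceiling_ge by blast
      then show "y \<in> \<Union>(range E)" by blast
    qed
  qed
  have "\<exists>n. M.mtopology interior_of E n \<noteq> {}"
  proof (rule ccontr)
    assume "\<nexists>n. M.mtopology interior_of E n \<noteq> {}"
    then have "M.mtopology interior_of \<Union>(range E) = {}"
      using closed by (intro M.metric_Baire_category_alt l2_complete) auto
    then show False using cover L2on_zero interior_of_topspace[of M.mtopology] by auto
  qed
  then obtain n y0 where y0: "y0 \<in> M.mtopology interior_of E n" by blast
  have "openin M.mtopology (M.mtopology interior_of E n)" by (rule openin_interior_of)
  then obtain r where r: "0 < r" "M.mball y0 r \<subseteq> M.mtopology interior_of E n"
    using y0 M.openin_mtopology by blast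
  have "inverse_bounded T S (4 * real n / r)"
  proof (rule inverse_bounded_if_ball_in_image[OF T _ _ r(1)])
    show "inj_on (opS T S) (L2on S)" using bij by (simp add: bij_betw_def)
    show "y0 \<in> L2on S" using y0 interior_of_subset_topspace[of M.mtopology "E n"] by auto
    show "M.mball y0 r \<subseteq> opS T S ` {x \<in> L2on S. l2norm x \<le> real n}"
      using r(2) interior_of_subset[of M.mtopology "E n"] unfolding E_def by blast
  qed
  then show ?thesis by (rule that)
qed

section \<open>Invertibility of \<open>T\<close> from invertibility of its compression\<close>

lemma inverse_bounded_pos:
  assumes "p \<in> S" "inverse_bounded T S c"
  shows "0 < c"
proof -
  have "1 \<le> c * l2norm (opS T S (delta p))"
    using assms delta_L2on[of p S] delta_props(2)[of p] unfolding inverse_bounded_def by force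
  then show ?thesis
    using mult_nonpos_nonneg[of c "l2norm (opS T S (delta p))"] by (cases "0 < c") auto
qed

lemma inverse_bounded_inj:
  assumes T: "banded T w C" and b: "inverse_bounded T S c"
  shows "inj_on (opS T S) (L2on S)"
proof (rule inj_onI)
  fix x y assume x: "x \<in> L2on S" and y: "y \<in> L2on S" and eq: "opS T S x = opS T S y"
  have "l2norm (\<lambda>i. x i - y i) \<le> c * l2norm (opS T S (\<lambda>i. x i - y i))"
    using b L2on_diff[OF x y] unfolding inverse_bounded_def by blast
  then have "l2norm (\<lambda>i. x i - y i) = 0"
    unfolding opS_diff[OF T] eq using l2norm_nonneg[of "\<lambda>i. x i - y i"] by simp
  then show "x = y"
    using l2norm_eq_0_iff[OF L2on_D(1)[OF L2on_diff[OF x y]]] by (simp add: fun_eq_iff)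
qed

lemma inverse_bounded_adj:
  assumes T: "banded T w C" and onto: "opS T S ` L2on S = L2on S" and b: "inverse_bounded T S c"
  shows "inverse_bounded (adj T) S c"
  unfolding inverse_bounded_def
proof
  fix y assume y: "y \<in> L2on S"
  then obtain u where u: "u \<in> L2on S" "y = opS T S u" using onto by force
  have Ty: "opS (adj T) S y \<in> L2on S" by (rule opS_L2on[OF banded_adj[OF T] y])
  have "ip y y = ip (restr S (mv T u)) y" using u(2) unfolding opS_def by simp
  also have "\<dots> = ip (mv T u) y" using L2on_D(2)[OF y] by (rule ip_restr_left)
  also have "\<dots> = ip u (mv (adj T) y)" by (rule ip_mv_adj[OF T L2on_D(1)[OF u(1)] L2on_D(1)[OF y]])
  also have "\<dots> = ip u (opS (adj T) S y)"
    unfolding opS_def using L2on_D(2)[OF u(1)] by (rule ip_restr_right[symmetric])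
  finally have "(l2norm y)^2 \<le> l2norm u * l2norm (opS (adj T) S y)"
    using Re_ip_self[OF L2on_D(1)[OF y]] complex_Re_le_cmod[of "ip y y"]
      norm_ip_le[OF L2on_D(1)[OF u(1)] L2on_D(1)[OF Ty]] by simp
  also have "\<dots> \<le> c * l2norm y * l2norm (opS (adj T) S y)"
    using b u unfolding inverse_bounded_def by (intro mult_right_mono) auto
  finally have "l2norm y * l2norm y \<le> l2norm y * (c * l2norm (opS (adj T) S y))"
    by (simp add: power2_eq_square ac_simps)
  moreover have "y = (\<lambda>i. 0)" if "l2norm y = 0"
    using that l2norm_eq_0_iff[OF L2on_D(1)[OF y]] by simp
  ultimately show "l2norm y \<le> c * l2norm (opS (adj T) S y)"
    using l2norm_nonneg[of y] by (cases "l2norm y = 0") auto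
qed

lemma inverse_bounded_UNIV_if_natset:
  assumes T: "banded T w C" "windows_recur T w" and b: "inverse_bounded T natset c"
  shows "inverse_bounded T UNIV c"
proof -
  have one: "1 \<in> natset" unfolding natset_def by simp
  have c: "0 < c" by (rule inverse_bounded_pos[OF one b])
  have "1 / c \<le> lnu_set natset T natset"
  proof (rule lnu_set_greatest[OF one])
    fix x assume "is_l2 x" "supp x \<subseteq> natset" "l2norm x = 1"
    then have "1 \<le> c * l2norm (restr natset (mv T x))"
      using b unfolding inverse_bounded_def L2on_def opS_def by auto
    then show "1 / c \<le> l2norm (restr natset (mv T x))" using c by (simp add: field_simps)
  qed
  also have "\<dots> \<le> lnu_set UNIV T UNIV" by (rule lnu_set_natset_le_UNIV[OF T])
  finally have m: "1 / c \<le> lnu_set UNIV T UNIV" .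
  show ?thesis unfolding inverse_bounded_def L2on_UNIV
  proof
    fix x assume "x \<in> {x. is_l2 x}"
    then have x: "is_l2 x" by simp
    have "1 / c * l2norm x \<le> lnu_set UNIV T UNIV * l2norm x" using m by (rule mult_right_mono) simp
    also have "\<dots> \<le> l2norm (mv T x)" using lnu_set_mult_le[OF T(1) x, of UNIV UNIV] by simp
    finally show "l2norm x \<le> c * l2norm (opS T UNIV x)" using c by (simp add: field_simps)
  qed
qed

lemma l2norm_sub_TTadj_power2_le:
  assumes T: "banded T w C" and e: "is_l2 e" and "0 \<le> \<alpha>"
    and lower: "m * l2norm e \<le> l2norm (mv (adj T) e)" "0 \<le> m"
    and upper: "l2norm (mv T (mv (adj T) e)) \<le> K * l2norm e"
  shows "(l2norm (\<lambda>i. e i - complex_of_real \<alpha> * mv T (mv (adj T) e) i))^2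
           \<le> (1 - 2 * \<alpha> * m^2 + \<alpha>^2 * K^2) * (l2norm e)^2"
proof -
  let ?a = "mv (adj T) e"
  define b where "b = (\<lambda>i. complex_of_real \<alpha> * mv T ?a i)"
  have a: "is_l2 ?a" using l2_mv[OF banded_adj[OF T] e] by blast
  have "is_l2 (mv T ?a)" using l2_mv[OF T a] by blast
  then have b: "is_l2 b" "l2norm b = \<alpha> * l2norm (mv T ?a)"
    unfolding b_def using l2_scale \<open>0 \<le> \<alpha>\<close> by auto
  have "Re (ip b e) = \<alpha> * (l2norm ?a)^2"
    unfolding b_def ip_scale_left ip_mv_adj[OF T a e] using Re_ip_self[OF a] by simp
  moreover have "(m * l2norm e)^2 \<le> (l2norm ?a)^2"
    using lower by (intro power_mono) auto
  ultimately have "\<alpha> * (m * l2norm e)^2 \<le> Re (ip b e)"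
    using \<open>0 \<le> \<alpha>\<close> by (simp add: mult_left_mono)
  then have "\<alpha> * m^2 * (l2norm e)^2 \<le> Re (ip b e)" by (simp add: power_mult_distrib mult.assoc)
  moreover have "(l2norm b)^2 \<le> \<alpha>^2 * K^2 * (l2norm e)^2"
    using upper \<open>0 \<le> \<alpha>\<close> unfolding b(2) power_mult_distrib[symmetric]
    by (intro power_mono) (auto simp: mult_left_mono mult.assoc)
  ultimately show ?thesis
    using l2norm_diff_power2[OF e b(1)] unfolding b_def by (simp add: algebra_simps)
qed

lemma TTadj_iteration_contraction:
  assumes T: "banded T w C" and z: "is_l2 z1" "is_l2 z2" and "0 \<le> \<alpha>" "0 \<le> m" "0 \<le> q"
    and lower: "\<And>e. is_l2 e \<Longrightarrow> m * l2norm e \<le> l2norm (mv (adj T) e)"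
    and upper: "\<And>e. is_l2 e \<Longrightarrow> is_l2 (mv T (mv (adj T) e)) \<and> l2norm (mv T (mv (adj T) e)) \<le> K * l2norm e"
    and q: "1 - 2 * \<alpha> * m^2 + \<alpha>^2 * K^2 = q^2"
  shows "l2_dist (\<lambda>i. z1 i - complex_of_real \<alpha> * (mv T (mv (adj T) z1) i - y i))
           (\<lambda>i. z2 i - complex_of_real \<alpha> * (mv T (mv (adj T) z2) i - y i)) \<le> q * l2_dist z1 z2"
proof -
  let ?H = "\<lambda>z. mv T (mv (adj T) z)"
  define e where "e = (\<lambda>i. z1 i - z2 i)"
  have e: "is_l2 e" unfolding e_def using l2_diff[OF z] by blast
  have "?H e = (\<lambda>i. ?H z1 i - ?H z2 i)"
    unfolding e_def mv_diff[OF banded_adj[OF T]] mv_diff[OF T] ..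
  then have "(\<lambda>i. (z1 i - complex_of_real \<alpha> * (?H z1 i - y i)) - (z2 i - complex_of_real \<alpha> * (?H z2 i - y i)))
      = (\<lambda>i. e i - complex_of_real \<alpha> * ?H e i)"
    by (simp add: e_def algebra_simps)
  then have "(l2_dist (\<lambda>i. z1 i - complex_of_real \<alpha> * (?H z1 i - y i))
      (\<lambda>i. z2 i - complex_of_real \<alpha> * (?H z2 i - y i)))^2 \<le> q^2 * (l2norm e)^2"
    unfolding l2_dist_def q[symmetric]
    by (rule ssubst) (rule l2norm_sub_TTadj_power2_le[OF T e \<open>0 \<le> \<alpha>\<close> lower[OF e]
      \<open>0 \<le> m\<close> conjunct2[OF upper[OF e]]])
  also have "\<dots> = (q * l2_dist z1 z2)^2" unfolding l2_dist_def e_def by (simp add: power_mult_distrib)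
  finally show ?thesis by (rule power2_le_imp_le) (simp add: \<open>0 \<le> q\<close> l2_dist_def)
qed

text \<open>Since \<open>T T\<^sup>*\<close> is bounded below by \<open>m\<^sup>2\<close> and above by \<open>M\<^sup>2\<close>, the map
  \<open>z \<mapsto> z - \<alpha> (T T\<^sup>* z - y)\<close> with \<open>\<alpha> = (m/M)\<^sup>2 / M\<^sup>2\<close> is a contraction; its fixed point \<open>z\<close>
  yields the preimage \<open>T\<^sup>* z\<close> of \<open>y\<close>.\<close>

lemma mv_surj_if_adj_inverse_bounded:
  assumes T: "banded T w C" and b: "inverse_bounded (adj T) UNIV c" and y: "is_l2 y"
  obtains x where "is_l2 x" "mv T x = y"
proof -
  interpret M: Metric_space "L2on UNIV" l2_dist by (rule l2_metric)
  let ?H = "\<lambda>z. mv T (mv (adj T) z)"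
  define M where "M = (2 * real w + 1) * C"
  have "0 < c" by (rule inverse_bounded_pos[OF UNIV_I b])
  define m where "m = 1 / c"
  have m: "0 < m" unfolding m_def using \<open>0 < c\<close> by simp
  have lower: "m * l2norm e \<le> l2norm (mv (adj T) e)" if "is_l2 e" for e
    using b that \<open>0 < c\<close> unfolding inverse_bounded_def L2on_UNIV m_def by (simp add: field_simps)
  have adj: "is_l2 (mv (adj T) e) \<and> l2norm (mv (adj T) e) \<le> M * l2norm e" if "is_l2 e" for e
    using l2_mv[OF banded_adj[OF T] that] unfolding M_def by (simp add: mult.assoc)
  have H: "is_l2 (?H e) \<and> l2norm (?H e) \<le> M^2 * l2norm e" if "is_l2 e" for e
  proof -
    have "l2norm (?H e) \<le> M * l2norm (mv (adj T) e)"
      using l2_mv[OF T conjunct1[OF adj[OF that]]] unfolding M_def by (simp add: mult.assoc)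
    also have "\<dots> \<le> M * (M * l2norm e)"
      using adj[OF that] banded_nonneg[OF T] unfolding M_def by (intro mult_left_mono) auto
    finally show ?thesis using l2_mv[OF T conjunct1[OF adj[OF that]]] by (simp add: power2_eq_square)
  qed
  have "m \<le> M"
    using lower[OF delta_props(1)[of 0]] adj[OF delta_props(1)[of 0]] delta_props(2)[of 0] by simp
  then have "0 < M" using m by linarith
  define \<rho> where "\<rho> = (m / M)^2"
  have \<rho>: "0 < \<rho>" "\<rho> \<le> 1" unfolding \<rho>_def using m \<open>m \<le> M\<close> by (auto simp: power_le_one)
  define \<alpha> where "\<alpha> = \<rho> / M^2"
  define q where "q = sqrt (1 - \<rho>^2)"
  have "\<alpha> * m^2 = \<rho>^2" "\<alpha>^2 * (M^2)^2 = \<rho>^2"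
    unfolding \<alpha>_def \<rho>_def using \<open>0 < M\<close> by (simp_all add: power2_eq_square field_simps)
  then have \<alpha>: "0 < \<alpha>" "1 - 2 * \<alpha> * m^2 + \<alpha>^2 * (M^2)^2 = q^2"
    unfolding q_def using \<rho> \<open>0 < M\<close> by (auto simp: \<alpha>_def power_le_one)
  have q: "0 \<le> q" "q < 1" unfolding q_def using \<rho> by (auto simp: power_le_one)
  define f where "f z = (\<lambda>i. z i - complex_of_real \<alpha> * (?H z i - y i))" for z
  have f: "is_l2 (f z)" if "is_l2 z" for z
    using l2_diff[OF that] l2_scale l2_diff[OF conjunct1[OF H[OF that]] y] unfolding f_def by blast
  have contraction: "l2_dist (f z1) (f z2) \<le> q * l2_dist z1 z2" if "is_l2 z1" "is_l2 z2" for z1 z2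
    unfolding f_def using TTadj_iteration_contraction[OF T that less_imp_le[OF \<alpha>(1)]
      less_imp_le[OF m] q(1) lower H \<alpha>(2)] .
  obtain z where z: "z \<in> L2on UNIV" "f z = z"
  proof (rule M.Banach_fixedpoint_thm[OF l2_complete _ _ q(2)])
    show "L2on UNIV \<noteq> {}" using L2on_zero by blast
    show "f \<in> L2on UNIV \<rightarrow> L2on UNIV" using f unfolding L2on_UNIV by blast
  qed (use contraction in \<open>simp add: L2on_UNIV\<close>)
  have "?H z i = y i" for i
    using fun_cong[OF z(2), of i] \<alpha>(1) unfolding f_def by simp
  moreover have "is_l2 (mv (adj T) z)" using adj z(1) unfolding L2on_UNIV by blast
  ultimately show ?thesis by (intro that) auto
qed

theorem invertible_on_UNIV_if_natset:
  assumes T: "banded T w C" "windows_recur T w"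
    and inv: "invertible_on T natset" and b: "inverse_bounded T natset c"
  shows "invertible_on T UNIV" "inverse_bounded T UNIV c"
proof -
  show bU: "inverse_bounded T UNIV c" by (rule inverse_bounded_UNIV_if_natset[OF T b])
  have "opS T natset ` L2on natset = L2on natset" using inv unfolding invertible_on_def bij_betw_def ..
  then have "inverse_bounded (adj T) natset c" by (rule inverse_bounded_adj[OF T(1) _ b])
  then have adj: "inverse_bounded (adj T) UNIV c"
    using banded_adj[OF T(1)] windows_recur_adj[OF T(2)] inverse_bounded_UNIV_if_natset by blast
  have "mv T ` {x. is_l2 x} = {x. is_l2 x}"
  proof
    show "mv T ` {x. is_l2 x} \<subseteq> {x. is_l2 x}" using l2_mv[OF T(1)] by blast
    show "{x. is_l2 x} \<subseteq> mv T ` {x. is_l2 x}"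
      using mv_surj_if_adj_inverse_bounded[OF T(1) adj] by (metis image_eqI mem_Collect_eq subsetI)
  qed
  then show "invertible_on T UNIV"
    using inverse_bounded_inj[OF T(1) bU] unfolding invertible_on_def bij_betw_def L2on_UNIV by simp
qed

lemma invnorm_le_iff:
  assumes T: "banded T w C" and inv: "invertible_on T S"
  shows "invnorm T S \<le> ereal c \<longleftrightarrow> inverse_bounded T S c"
proof -
  let ?X = "L2on S" and ?S = "opS T S"
  have inj: "inj_on ?S ?X" and onto: "?S ` ?X = ?X" using inv by (auto simp: invertible_on_def bij_betw_def)
  have "invnorm T S \<le> ereal c \<longleftrightarrow> (\<forall>y\<in>?X. l2norm y = 1 \<longrightarrow> l2norm (inv_into ?X ?S y) \<le> c)"
    unfolding invnorm_def using inv by (auto simp: SUP_le_iff)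
  also have "\<dots> \<longleftrightarrow> (\<forall>x\<in>?X. l2norm (?S x) = 1 \<longrightarrow> l2norm x \<le> c)"
  proof
    assume "\<forall>y\<in>?X. l2norm y = 1 \<longrightarrow> l2norm (inv_into ?X ?S y) \<le> c"
    then show "\<forall>x\<in>?X. l2norm (?S x) = 1 \<longrightarrow> l2norm x \<le> c"
      using opS_L2on[OF T] inv_into_f_f[OF inj] by metis
  next
    assume "\<forall>x\<in>?X. l2norm (?S x) = 1 \<longrightarrow> l2norm x \<le> c"
    moreover have "inv_into ?X ?S y \<in> ?X" "?S (inv_into ?X ?S y) = y" if "y \<in> ?X" for y
      using onto that inv_into_into[of y ?S ?X] f_inv_into_f[of y ?S ?X] by simp_all
    ultimately show "\<forall>y\<in>?X. l2norm y = 1 \<longrightarrow> l2norm (inv_into ?X ?S y) \<le> c" by metis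
  qed
  also have "\<dots> \<longleftrightarrow> inverse_bounded T S c"
    using inverse_bounded_if_sphere[OF T inj, of 1] by (auto simp: inverse_bounded_def)
  finally show ?thesis .
qed

theorem invnorm_UNIV_le_natset:
  assumes T: "banded T w C" "windows_recur T w"
  shows "invnorm T UNIV \<le> invnorm T natset"
proof (rule ereal_le_real)
  fix c assume c: "invnorm T natset \<le> ereal c"
  then have inv: "invertible_on T natset" unfolding invnorm_def by (auto split: if_splits)
  with c have "inverse_bounded T natset c" using invnorm_le_iff[OF T(1)] by blast
  then have "invertible_on T UNIV" "inverse_bounded T UNIV c"
    using invertible_on_UNIV_if_natset[OF T inv] by simp_all
  then show "invnorm T UNIV \<le> ereal c" using invnorm_le_iff[OF T(1)] by blast
qed

lemma spec_UNIV_subset_natset: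
  assumes A: "banded A w C" "windows_recur A w"
  shows "spec A UNIV \<subseteq> spec A natset"
proof
  fix z assume z: "z \<in> spec A UNIV"
  have T: "banded (shiftm A z) w (C + cmod z)" "windows_recur (shiftm A z) w"
    using banded_shiftm[OF A(1)] windows_recur_shiftm[OF A(2)] by auto
  show "z \<in> spec A natset"
  proof (rule ccontr)
    assume "z \<notin> spec A natset"
    then have inv: "invertible_on (shiftm A z) natset" unfolding spec_def by simp
    obtain c where "inverse_bounded (shiftm A z) natset c"
      using invertible_on_inverse_bounded[OF T(1) inv] by blast
    then have "invertible_on (shiftm A z) UNIV" by (rule invertible_on_UNIV_if_natset[OF T inv])
    then show False using z unfolding spec_def by simp
  qed
qed

lemma pspec_UNIV_subset_natset:
  assumes A: "banded A w C" "windows_recur A w"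
  shows "pspec \<epsilon> A UNIV \<subseteq> pspec \<epsilon> A natset"
  using invnorm_UNIV_le_natset[OF banded_shiftm[OF A(1)] windows_recur_shiftm[OF A(2)]]
  unfolding pspec_def by (auto intro: less_le_trans)

theorem proposition4p5:
  fixes A :: mat and w :: nat
  assumes "band_op A w"
  shows "(\<forall>T \<in> Ts A. \<forall>N::nat. N \<ge> 1 \<longrightarrow>
           lnu_loc N T natset natset =
             Min ({lnu_loc N T natset UNIV} \<union>
                  {lnu_set {int j .. int j + int N - 1} T natset | j. j \<in> {1..w}})) \<and>
         (csubs A UNIV w = csubs A natset w \<longrightarrow>
           (\<forall>T \<in> Ts A. \<forall>N::nat. N \<ge> 1 \<longrightarrow>
              lnu_loc N T natset UNIV = lnu_loc N T UNIV UNIV \<and>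
              lnu_loc N T natset natset =
                Min ({lnu_loc N T UNIV UNIV} \<union>
                     {lnu_set {int j .. int j + int N - 1} T natset | j. j \<in> {1..w}})) \<and>
           (\<forall>T \<in> Ts A. lnu_set natset T natset \<le> lnu_set UNIV T UNIV \<and>
                        invnorm T natset \<ge> invnorm T UNIV) \<and>
           spec A UNIV \<subseteq> spec A natset \<and>
           (\<forall>\<epsilon>>0. pspec \<epsilon> A UNIV \<subseteq> pspec \<epsilon> A natset))"
proof -
  have banded: "\<exists>C. banded T w C" if "T \<in> Ts A" for T by (rule Ts_banded[OF assms that])
  have recur: "windows_recur T w" if "csubs A UNIV w = csubs A natset w" "T \<in> Ts A" for T
    using Ts_windows_recur[OF csubs_windows_recur[OF that(1)] that(2)] .
  have "lnu_loc N T natset natset = Min ({lnu_loc N T natset UNIV} \<union>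
      {lnu_set {int j .. int j + int N - 1} T natset | j. j \<in> {1..w}})" if "T \<in> Ts A" "N \<ge> 1" for T N
    using banded[OF that(1)] lnu_loc_natset_natset_eq_Min that(2) by blast
  moreover have "lnu_loc N T natset UNIV = lnu_loc N T UNIV UNIV"
    if "csubs A UNIV w = csubs A natset w" "T \<in> Ts A" "N \<ge> 1" for T N
    using banded[OF that(2)] recur[OF that(1,2)] that(3) lnu_loc_natset_UNIV_eq by blast
  moreover have "lnu_set natset T natset \<le> lnu_set UNIV T UNIV \<and> invnorm T UNIV \<le> invnorm T natset"
    if "csubs A UNIV w = csubs A natset w" "T \<in> Ts A" for T
    using banded[OF that(2)] recur[OF that] lnu_set_natset_le_UNIV invnorm_UNIV_le_natset by blast
  moreover obtain C where "banded A w C" using assms unfolding band_op_def banded_def by blast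
  ultimately show ?thesis
    using csubs_windows_recur spec_UNIV_subset_natset pspec_UNIV_subset_natset by (auto simp del: Min_ge_iff)
qed

end
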